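(* Let $\mathbb{A}$ be a 2-category and $p:e\to b$ a 1-cell such that $\mathbb{A}$ has the two-dimensional cokernel diagram of $p$, a right Kan extension $(t,\gamma)$ of $p$ along $p$ exists, and it is preserved by $\delta^0:b\to b\uparrow_pb$. Let $\mathsf{T}=(b,t,m,\eta)$ be the codensity monad of $p$. For each object $x$ consider the factorizations $$\mathbb{A}(x,p)=U^{H}_x\circ K^{H}_x:\ \mathbb{A}(x,e)\to \mathrm{Desc}_p(x)\to\mathbb{A}(x,b),\qquad \mathbb{A}(x,p)=U^{\mathsf{T}}_x\circ K^{\mathsf{T}}_x:\ \mathbb{A}(x,e)\to \mathrm{Alg}_{\mathsf{T}}(x)\to\mathbb{A}(x,b),$$ where $K^H_x(g)=(pg,\alpha\ast\mathrm{id}_g)$, $K^H_x(\chi)=\mathrm{id}_p\ast\chi$, $K^{\mathsf{T}}_x(g)=(pg,\gamma\ast\mathrm{id}_g)$, $K^{\mathsf{T}}_x(\chi)=\mathrm{id}_p\ast\chi$, and $U^H_x$, $U^{\mathsf{T}}_x$ are the forgetful functors $(h,\beta)\mapsto h$, $\xi\mapsto\xi$. Then these two factorizations are isomorphic, 2-naturally in $x$: there are isomorphisms of categories $\Phi_x:\mathrm{Desc}_p(x)\to\mathrm{Alg}_{\mathsf{T}}(x)$, 2-natural in $x$ (with respect to precomposition by 1-cells and 2-cells $x'\to x$), such that $U^{\mathsf{T}}_x\Phi_x=U^H_x$ and $\Phi_xK^H_x=K^{\mathsf{T}}_x$.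
   Context: A 2-category is a $\mathbf{Cat}$-enriched category; composition of 1-cells is juxtaposition, vertical composition of 2-cells is $\cdot$, horizontal composition is $\ast$, $\mathrm{id}_f$ is the identity 2-cell on $f$; $\mathbb{A}(x,y)$ is the hom-category. Opcomma object of $p$ along itself: an object $b\uparrow_p b$ with 1-cells $\delta^0,\delta^1:b\to b\uparrow_p b$ and a 2-cell $\alpha:\delta^1p\Rightarrow\delta^0p$ such that for every object $y$ the functor $h\mapsto(h\delta^0,h\delta^1,\mathrm{id}_h\ast\alpha)$, $\xi\mapsto(\xi\ast\mathrm{id}_{\delta^0},\xi\ast\mathrm{id}_{\delta^1})$ is an isomorphism from $\mathbb{A}(b\uparrow_p b,y)$ onto the category of triples $(h_0,h_1:b\to y,\ \beta:h_1p\Rightarrow h_0p)$ with morphisms pairs of 2-cells $(\xi_0:h_0\Rightarrow h_0',\xi_1:h_1\Rightarrow h_1')$ satisfying $(\xi_0\ast\mathrm{id}_p)\cdot\beta=\beta'\cdot(\xi_1\ast\mathrm{id}_p)$. Two-dimensional pushout of a span $f_0:c\to c_0$, $f_1:c\to c_1$: an object $P$ with $q_0:c_0\to P$, $q_1:c_1\to P$, $q_0f_0=q_1f_1$, such that for every $y$, $k\mapsto(kq_0,kq_1)$ is an isomorphism from $\mathbb{A}(P,y)$ onto the category of pairs $(k_0,k_1)$ with $k_0f_0=k_1f_1$, whose morphisms are pairs of 2-cells $(\xi_0,\xi_1)$ with $\xi_0\ast\mathrm{id}_{f_0}=\xi_1\ast\mathrm{id}_{f_1}$. $\mathbb{A}$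 has the two-dimensional cokernel diagram of $p$ if it has an opcomma object $b\uparrow_p b$ of $p$ along itself and a two-dimensional pushout $b\uparrow_pb\uparrow_pb$ of the span $(\delta^0,\delta^1)$, with 1-cells $D^0,D^2$ satisfying $D^2\delta^0=D^0\delta^1$. Then $D^1$ is the unique 1-cell with $D^1\delta^1=D^2\delta^1$, $D^1\delta^0=D^0\delta^0$, $\mathrm{id}_{D^1}\ast\alpha=(\mathrm{id}_{D^0}\ast\alpha)\cdot(\mathrm{id}_{D^2}\ast\alpha)$, and $s^0:b\uparrow_pb\to b$ is the unique 1-cell with $s^0\delta^0=s^0\delta^1=\mathrm{id}_b$, $\mathrm{id}_{s^0}\ast\alpha=\mathrm{id}_p$. $\mathrm{Desc}_p(x)$ (the lax descent category of $\mathbb{A}(x,-)$ applied to the two-dimensional cokernel diagram of $p$): objects are pairs $(h:x\to b,\ \beta:\delta^1h\Rightarrow\delta^0h)$ with $(\mathrm{id}_{D^0}\ast\beta)\cdot(\mathrm{id}_{D^2}\ast\beta)=\mathrm{id}_{D^1}\ast\beta$ and $\mathrm{id}_{s^0}\ast\beta=\mathrm{id}_h$; morphisms $(h_1,\beta_1)\to(h_0,\beta_0)$ are 2-cells $\xi:h_1\Rightarrow h_0$ with $\beta_0\cdot(\mathrm{id}_{\delta^1}\ast\xi)=(\mathrm{id}_{\delta^0}\ast\xi)\cdot\beta_1$. Right Kan extension of $f:z\to y$ along $g:z\to w$: a pair $(r:w\to y,\gamma:rg\Rightarrow f)$ such that for each $k:w\to y$, $\beta\mapsto\gamma\cdot(\beta\ast\mathrm{id}_g)$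 is a bijection from 2-cells $k\Rightarrow r$ to 2-cells $kg\Rightarrow f$; a 1-cell $d$ preserves it if $(dr,\mathrm{id}_d\ast\gamma)$ is a right Kan extension of $df$ along $g$. Codensity monad $\mathsf{T}=(b,t,m,\eta)$ of $p$: $(t,\gamma)$ a right Kan extension of $p$ along $p$, $m:tt\Rightarrow t$ unique with $\gamma\cdot(m\ast\mathrm{id}_p)=\gamma\cdot(\mathrm{id}_t\ast\gamma)$, $\eta:\mathrm{id}_b\Rightarrow t$ unique with $\gamma\cdot(\eta\ast\mathrm{id}_p)=\mathrm{id}_p$. $\mathrm{Alg}_{\mathsf{T}}(x)$ (Eilenberg–Moore category of the monad $\mathbb{A}(x,\mathsf{T})$ on $\mathbb{A}(x,b)$): objects are pairs $(h:x\to b,\ \beta:th\Rightarrow h)$ with $\beta\cdot(\mathrm{id}_t\ast\beta)=\beta\cdot(m\ast\mathrm{id}_h)$ and $\beta\cdot(\eta\ast\mathrm{id}_h)=\mathrm{id}_h$; morphisms $(h_1,\beta_1)\to(h_0,\beta_0)$ are 2-cells $\xi:h_1\Rightarrow h_0$ with $\xi\cdot\beta_1=\beta_0\cdot(\mathrm{id}_t\ast\xi)$. *)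

theory Defs
  imports Main
begin

text \<open>A 2-category with objects of type 'o, 1-cells of type 'a and 2-cells of type 'c,
  each sort carved out by a carrier set. comp1 g f is the juxtaposition g f (first f, then g);
  vcomp is vertical composition (written with a centered dot), hcomp is horizontal composition
  (written with a star); idn2 f is the identity 2-cell on f.\<close>

record ('o,'a,'c) two_cat =
  tc_obj :: "'o set"
  tc_ar1 :: "'a set"
  tc_ar2 :: "'c set"
  src1 :: "'a \<Rightarrow> 'o"
  tgt1 :: "'a \<Rightarrow> 'o"
  src2 :: "'c \<Rightarrow> 'a"
  tgt2 :: "'c \<Rightarrow> 'a"
  idn1 :: "'o \<Rightarrow> 'a"
  idn2 :: "'a \<Rightarrow> 'c"
  comp1 :: "'a \<Rightarrow> 'a \<Rightarrow> 'a"
  vcomp :: "'c \<Rightarrow> 'c \<Rightarrow> 'c"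
  hcomp :: "'c \<Rightarrow> 'c \<Rightarrow> 'c"

record ('ob,'ar) cat =
  cobj :: "'ob set"
  carr :: "'ar set"
  cdom :: "'ar \<Rightarrow> 'ob"
  ccod :: "'ar \<Rightarrow> 'ob"
  ccomp :: "'ar \<Rightarrow> 'ar \<Rightarrow> 'ar"
  cid :: "'ob \<Rightarrow> 'ar"

definition is_functor ::
  "('o1,'a1) cat \<Rightarrow> ('o2,'a2) cat \<Rightarrow> ('o1 \<Rightarrow> 'o2) \<times> ('a1 \<Rightarrow> 'a2) \<Rightarrow> bool" where
  "is_functor C D F \<longleftrightarrow>
     (\<forall>ob\<in>cobj C. fst F ob \<in> cobj D) \<and>
     (\<forall>a\<in>carr C. snd F a \<in> carr D \<and> cdom D (snd F a) = fst F (cdom C a)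
                 \<and> ccod D (snd F a) = fst F (ccod C a)) \<and>
     (\<forall>a\<in>carr C. \<forall>a'\<in>carr C. ccod C a = cdom C a' \<longrightarrow>
         snd F (ccomp C a' a) = ccomp D (snd F a') (snd F a)) \<and>
     (\<forall>ob\<in>cobj C. snd F (cid C ob) = cid D (fst F ob))"

definition fcomp :: "('o2 \<Rightarrow> 'o3) \<times> ('a2 \<Rightarrow> 'a3) \<Rightarrow> ('o1 \<Rightarrow> 'o2) \<times> ('a1 \<Rightarrow> 'a2)
    \<Rightarrow> ('o1 \<Rightarrow> 'o3) \<times> ('a1 \<Rightarrow> 'a3)" where
  "fcomp G F = (fst G \<circ> fst F, snd G \<circ> snd F)"

definition fun_eq :: "('o1,'a1) cat \<Rightarrow> ('o1 \<Rightarrow> 'o2) \<times> ('a1 \<Rightarrow> 'a2)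
    \<Rightarrow> ('o1 \<Rightarrow> 'o2) \<times> ('a1 \<Rightarrow> 'a2) \<Rightarrow> bool" where
  "fun_eq C F G \<longleftrightarrow> (\<forall>ob\<in>cobj C. fst F ob = fst G ob) \<and> (\<forall>a\<in>carr C. snd F a = snd G a)"

definition cat_iso ::
  "('o1,'a1) cat \<Rightarrow> ('o2,'a2) cat \<Rightarrow> ('o1 \<Rightarrow> 'o2) \<times> ('a1 \<Rightarrow> 'a2) \<Rightarrow> bool" where
  "cat_iso C D F \<longleftrightarrow> is_functor C D F \<and>
     (\<exists>G. is_functor D C G \<and> fun_eq C (fcomp G F) (id, id) \<and> fun_eq D (fcomp F G) (id, id))"

locale TC =
  fixes A :: "('o,'a,'c) two_cat"
begin

abbreviation "Ob \<equiv> tc_obj A"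
abbreviation "Ar1 \<equiv> tc_ar1 A"
abbreviation "Ar2 \<equiv> tc_ar2 A"
abbreviation "s1 \<equiv> src1 A"
abbreviation "t1 \<equiv> tgt1 A"
abbreviation "s2 \<equiv> src2 A"
abbreviation "t2 \<equiv> tgt2 A"
abbreviation "i1 \<equiv> idn1 A"
abbreviation "i2 \<equiv> idn2 A"
abbreviation cmp1 (infixr "\<odot>" 75) where "g \<odot> f \<equiv> comp1 A g f"
abbreviation vcmp (infixr "\<cdot>" 70) where "\<beta> \<cdot> \<alpha> \<equiv> vcomp A \<beta> \<alpha>"
abbreviation hcmp (infixr "\<star>" 80) where "\<beta> \<star> \<alpha> \<equiv> hcomp A \<beta> \<alpha>"

abbreviation is_1cell where "is_1cell f x y \<equiv> f \<in> Ar1 \<and> s1 f = x \<and> t1 f = y"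
abbreviation is_2cell where "is_2cell \<theta> f g \<equiv> \<theta> \<in> Ar2 \<and> s2 \<theta> = f \<and> t2 \<theta> = g"

definition homcat :: "'o \<Rightarrow> 'o \<Rightarrow> ('a,'c) cat" where
  "homcat x y = \<lparr> cobj = {f. is_1cell f x y},
                  carr = {\<theta>\<in>Ar2. is_1cell (s2 \<theta>) x y \<and> is_1cell (t2 \<theta>) x y},
                  cdom = s2, ccod = t2, ccomp = vcomp A, cid = i2 \<rparr>"

end

locale two_category = TC +
  assumes id1_ar: "x \<in> Ob \<Longrightarrow> is_1cell (i1 x) x x"
  and ar1_ends: "f \<in> Ar1 \<Longrightarrow> s1 f \<in> Ob \<and> t1 f \<in> Ob"
  and comp1_ar: "\<lbrakk>f \<in> Ar1; g \<in> Ar1; t1 f = s1 g\<rbrakk> \<Longrightarrow> is_1cell (g \<odot> f) (s1 f) (t1 g)"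
  and comp1_assoc: "\<lbrakk>f \<in> Ar1; g \<in> Ar1; h \<in> Ar1; t1 f = s1 g; t1 g = s1 h\<rbrakk>
                      \<Longrightarrow> (h \<odot> g) \<odot> f = h \<odot> (g \<odot> f)"
  and comp1_idl: "f \<in> Ar1 \<Longrightarrow> i1 (t1 f) \<odot> f = f"
  and comp1_idr: "f \<in> Ar1 \<Longrightarrow> f \<odot> i1 (s1 f) = f"
  and ar2_ends: "\<theta> \<in> Ar2 \<Longrightarrow> s2 \<theta> \<in> Ar1 \<and> t2 \<theta> \<in> Ar1 \<and>
                   s1 (s2 \<theta>) = s1 (t2 \<theta>) \<and> t1 (s2 \<theta>) = t1 (t2 \<theta>)"
  and id2_ar: "f \<in> Ar1 \<Longrightarrow> is_2cell (i2 f) f f"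
  and vcomp_ar: "\<lbrakk>\<theta> \<in> Ar2; \<phi> \<in> Ar2; t2 \<theta> = s2 \<phi>\<rbrakk> \<Longrightarrow> is_2cell (\<phi> \<cdot> \<theta>) (s2 \<theta>) (t2 \<phi>)"
  and vcomp_assoc: "\<lbrakk>\<theta> \<in> Ar2; \<phi> \<in> Ar2; \<psi> \<in> Ar2; t2 \<theta> = s2 \<phi>; t2 \<phi> = s2 \<psi>\<rbrakk>
                      \<Longrightarrow> (\<psi> \<cdot> \<phi>) \<cdot> \<theta> = \<psi> \<cdot> (\<phi> \<cdot> \<theta>)"
  and vcomp_idl: "\<theta> \<in> Ar2 \<Longrightarrow> i2 (t2 \<theta>) \<cdot> \<theta> = \<theta>"
  and vcomp_idr: "\<theta> \<in> Ar2 \<Longrightarrow> \<theta> \<cdot> i2 (s2 \<theta>) = \<theta>"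
  and hcomp_ar: "\<lbrakk>\<theta> \<in> Ar2; \<phi> \<in> Ar2; t1 (s2 \<theta>) = s1 (s2 \<phi>)\<rbrakk>
                   \<Longrightarrow> is_2cell (\<phi> \<star> \<theta>) (s2 \<phi> \<odot> s2 \<theta>) (t2 \<phi> \<odot> t2 \<theta>)"
  and hcomp_assoc: "\<lbrakk>\<theta> \<in> Ar2; \<phi> \<in> Ar2; \<psi> \<in> Ar2; t1 (s2 \<theta>) = s1 (s2 \<phi>);
                      t1 (s2 \<phi>) = s1 (s2 \<psi>)\<rbrakk> \<Longrightarrow> (\<psi> \<star> \<phi>) \<star> \<theta> = \<psi> \<star> (\<phi> \<star> \<theta>)"
  and hcomp_idl: "\<theta> \<in> Ar2 \<Longrightarrow> i2 (i1 (t1 (s2 \<theta>))) \<star> \<theta> = \<theta>"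
  and hcomp_idr: "\<theta> \<in> Ar2 \<Longrightarrow> \<theta> \<star> i2 (i1 (s1 (s2 \<theta>))) = \<theta>"
  and hcomp_id2: "\<lbrakk>f \<in> Ar1; g \<in> Ar1; t1 f = s1 g\<rbrakk> \<Longrightarrow> i2 g \<star> i2 f = i2 (g \<odot> f)"
  and interchange: "\<lbrakk>\<theta> \<in> Ar2; \<theta>' \<in> Ar2; \<phi> \<in> Ar2; \<phi>' \<in> Ar2; t2 \<theta> = s2 \<theta>'; t2 \<phi> = s2 \<phi>';
                      t1 (s2 \<theta>) = s1 (s2 \<phi>)\<rbrakk>
                      \<Longrightarrow> (\<phi>' \<cdot> \<phi>) \<star> (\<theta>' \<cdot> \<theta>) = (\<phi>' \<star> \<theta>') \<cdot> (\<phi> \<star> \<theta>)"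

context TC
begin

section \<open>Opcomma object of p along itself\<close>

text \<open>The category of triples (h0, h1 : b \<rightarrow> y, beta : h1 p \<Rightarrow> h0 p); a morphism is
  recorded together with its source and target objects.\<close>

definition triples :: "'a \<Rightarrow> 'o \<Rightarrow> 'o \<Rightarrow>
    ('a \<times> 'a \<times> 'c, ('a \<times> 'a \<times> 'c) \<times> ('c \<times> 'c) \<times> ('a \<times> 'a \<times> 'c)) cat" where
  "triples p b y = \<lparr>
     cobj = {(h0, h1, \<beta>). is_1cell h0 b y \<and> is_1cell h1 b y \<and> is_2cell \<beta> (h1 \<odot> p) (h0 \<odot> p)},
     carr = {((h0, h1, \<beta>), (\<xi>0, \<xi>1), (h0', h1', \<beta>')).
               is_1cell h0 b y \<and> is_1cell h1 b y \<and> is_2cell \<beta> (h1 \<odot> p) (h0 \<odot> p) \<and>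
               is_1cell h0' b y \<and> is_1cell h1' b y \<and> is_2cell \<beta>' (h1' \<odot> p) (h0' \<odot> p) \<and>
               is_2cell \<xi>0 h0 h0' \<and> is_2cell \<xi>1 h1 h1' \<and>
               (\<xi>0 \<star> i2 p) \<cdot> \<beta> = \<beta>' \<cdot> (\<xi>1 \<star> i2 p)},
     cdom = fst, ccod = (\<lambda>a. snd (snd a)),
     ccomp = (\<lambda>(ob1', (\<xi>0', \<xi>1'), ob2') (ob1, (\<xi>0, \<xi>1), ob2). (ob1, (\<xi>0' \<cdot> \<xi>0, \<xi>1' \<cdot> \<xi>1), ob2')),
     cid = (\<lambda>(h0, h1, \<beta>). ((h0, h1, \<beta>), (i2 h0, i2 h1), (h0, h1, \<beta>))) \<rparr>"

definition opc_functor where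
  "opc_functor d0 d1 \<alpha> =
     ((\<lambda>h. (h \<odot> d0, h \<odot> d1, i2 h \<star> \<alpha>)),
      (\<lambda>\<xi>. ((s2 \<xi> \<odot> d0, s2 \<xi> \<odot> d1, i2 (s2 \<xi>) \<star> \<alpha>), (\<xi> \<star> i2 d0, \<xi> \<star> i2 d1),
            (t2 \<xi> \<odot> d0, t2 \<xi> \<odot> d1, i2 (t2 \<xi>) \<star> \<alpha>))))"

definition is_opcomma :: "'o \<Rightarrow> 'o \<Rightarrow> 'a \<Rightarrow> 'o \<Rightarrow> 'a \<Rightarrow> 'a \<Rightarrow> 'c \<Rightarrow> bool" where
  "is_opcomma e b p B d0 d1 \<alpha> \<longleftrightarrow>
     is_1cell p e b \<and> B \<in> Ob \<and> is_1cell d0 b B \<and> is_1cell d1 b B \<and>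
     is_2cell \<alpha> (d1 \<odot> p) (d0 \<odot> p) \<and>
     (\<forall>y\<in>Ob. cat_iso (homcat B y) (triples p b y) (opc_functor d0 d1 \<alpha>))"

definition cocones :: "'o \<Rightarrow> 'o \<Rightarrow> 'a \<Rightarrow> 'a \<Rightarrow> 'o \<Rightarrow>
    ('a \<times> 'a, ('a \<times> 'a) \<times> ('c \<times> 'c) \<times> ('a \<times> 'a)) cat" where
  "cocones c0 c1 f0 f1 y = \<lparr>
     cobj = {(k0, k1). is_1cell k0 c0 y \<and> is_1cell k1 c1 y \<and> k0 \<odot> f0 = k1 \<odot> f1},
     carr = {((k0, k1), (\<xi>0, \<xi>1), (k0', k1')).
               is_1cell k0 c0 y \<and> is_1cell k1 c1 y \<and> k0 \<odot> f0 = k1 \<odot> f1 \<and>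
               is_1cell k0' c0 y \<and> is_1cell k1' c1 y \<and> k0' \<odot> f0 = k1' \<odot> f1 \<and>
               is_2cell \<xi>0 k0 k0' \<and> is_2cell \<xi>1 k1 k1' \<and> \<xi>0 \<star> i2 f0 = \<xi>1 \<star> i2 f1},
     cdom = fst, ccod = (\<lambda>a. snd (snd a)),
     ccomp = (\<lambda>(ob1', (\<xi>0', \<xi>1'), ob2') (ob1, (\<xi>0, \<xi>1), ob2). (ob1, (\<xi>0' \<cdot> \<xi>0, \<xi>1' \<cdot> \<xi>1), ob2')),
     cid = (\<lambda>(k0, k1). ((k0, k1), (i2 k0, i2 k1), (k0, k1))) \<rparr>"

definition po_functor where
  "po_functor q0 q1 =
     ((\<lambda>k. (k \<odot> q0, k \<odot> q1)),
      (\<lambda>\<xi>. ((s2 \<xi> \<odot> q0, s2 \<xi> \<odot> q1), (\<xi> \<star> i2 q0, \<xi> \<star> i2 q1), (t2 \<xi> \<odot> q0, t2 \<xi> \<odot> q1))))"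

definition is_2pushout :: "'o \<Rightarrow> 'o \<Rightarrow> 'o \<Rightarrow> 'a \<Rightarrow> 'a \<Rightarrow> 'o \<Rightarrow> 'a \<Rightarrow> 'a \<Rightarrow> bool" where
  "is_2pushout c c0 c1 f0 f1 P q0 q1 \<longleftrightarrow>
     is_1cell f0 c c0 \<and> is_1cell f1 c c1 \<and> P \<in> Ob \<and> is_1cell q0 c0 P \<and> is_1cell q1 c1 P \<and>
     q0 \<odot> f0 = q1 \<odot> f1 \<and>
     (\<forall>y\<in>Ob. cat_iso (homcat P y) (cocones c0 c1 f0 f1 y) (po_functor q0 q1))"

section \<open>The two-dimensional cokernel diagram of p\<close>

text \<open>B = b\<up>_p b with d0, d1, alpha; P = b\<up>_p b\<up>_p b with D0, D2 (D2 d0 = D0 d1);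
  D1 and s0 the induced 1-cells.\<close>
definition is_cokernel_diagram where
  "is_cokernel_diagram e b p B d0 d1 \<alpha> P D0 D1 D2 s0 \<longleftrightarrow>
     is_opcomma e b p B d0 d1 \<alpha> \<and>
     is_2pushout b B B d0 d1 P D2 D0 \<and>
     is_1cell D1 B P \<and> D1 \<odot> d1 = D2 \<odot> d1 \<and> D1 \<odot> d0 = D0 \<odot> d0 \<and>
     i2 D1 \<star> \<alpha> = (i2 D0 \<star> \<alpha>) \<cdot> (i2 D2 \<star> \<alpha>) \<and>
     is_1cell s0 B b \<and> s0 \<odot> d0 = i1 b \<and> s0 \<odot> d1 = i1 b \<and> i2 s0 \<star> \<alpha> = i2 p"

section \<open>Right Kan extensions and the codensity monad\<close>

definition is_ran :: "'a \<Rightarrow> 'a \<Rightarrow> 'a \<Rightarrow> 'c \<Rightarrow> bool" where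
  "is_ran g f r \<gamma> \<longleftrightarrow>
     f \<in> Ar1 \<and> g \<in> Ar1 \<and> s1 f = s1 g \<and> is_1cell r (t1 g) (t1 f) \<and>
     is_2cell \<gamma> (r \<odot> g) f \<and>
     (\<forall>k. is_1cell k (t1 g) (t1 f) \<longrightarrow>
        bij_betw (\<lambda>\<beta>. \<gamma> \<cdot> (\<beta> \<star> i2 g)) {\<beta>. is_2cell \<beta> k r} {\<theta>. is_2cell \<theta> (k \<odot> g) f})"

definition preserves_ran :: "'a \<Rightarrow> 'a \<Rightarrow> 'a \<Rightarrow> 'a \<Rightarrow> 'c \<Rightarrow> bool" where
  "preserves_ran d g f r \<gamma> \<longleftrightarrow> d \<in> Ar1 \<and> s1 d = t1 f \<and> is_ran g (d \<odot> f) (d \<odot> r) (i2 d \<star> \<gamma>)"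

definition is_codensity_monad where
  "is_codensity_monad b p t \<gamma> m \<eta> \<longleftrightarrow>
     is_ran p p t \<gamma> \<and>
     is_2cell m (t \<odot> t) t \<and> \<gamma> \<cdot> (m \<star> i2 p) = \<gamma> \<cdot> (i2 t \<star> \<gamma>) \<and>
     is_2cell \<eta> (i1 b) t \<and> \<gamma> \<cdot> (\<eta> \<star> i2 p) = i2 p"

section \<open>Desc_p(x) and Alg_T(x)\<close>

definition Desc :: "'o \<Rightarrow> 'a \<Rightarrow> 'a \<Rightarrow> 'a \<Rightarrow> 'a \<Rightarrow> 'a \<Rightarrow> 'a \<Rightarrow> 'o \<Rightarrow>
    ('a \<times> 'c, ('a \<times> 'c) \<times> 'c \<times> ('a \<times> 'c)) cat" where
  "Desc b d0 d1 D0 D1 D2 s0 x =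
    (let Obs = {(h, \<beta>). is_1cell h x b \<and> is_2cell \<beta> (d1 \<odot> h) (d0 \<odot> h) \<and>
                       (i2 D0 \<star> \<beta>) \<cdot> (i2 D2 \<star> \<beta>) = i2 D1 \<star> \<beta> \<and> i2 s0 \<star> \<beta> = i2 h}
     in \<lparr> cobj = Obs,
          carr = {((h1, \<beta>1), \<xi>, (h0, \<beta>0)). (h1, \<beta>1) \<in> Obs \<and> (h0, \<beta>0) \<in> Obs \<and>
                    is_2cell \<xi> h1 h0 \<and> \<beta>0 \<cdot> (i2 d1 \<star> \<xi>) = (i2 d0 \<star> \<xi>) \<cdot> \<beta>1},
          cdom = fst, ccod = (\<lambda>a. snd (snd a)),
          ccomp = (\<lambda>(ob1', \<xi>', ob0') (ob1, \<xi>, ob0). (ob1, \<xi>' \<cdot> \<xi>, ob0')),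
          cid = (\<lambda>ob. (ob, i2 (fst ob), ob)) \<rparr>)"

definition Alg :: "'o \<Rightarrow> 'a \<Rightarrow> 'c \<Rightarrow> 'c \<Rightarrow> 'o \<Rightarrow>
    ('a \<times> 'c, ('a \<times> 'c) \<times> 'c \<times> ('a \<times> 'c)) cat" where
  "Alg b t m \<eta> x =
    (let Obs = {(h, \<beta>). is_1cell h x b \<and> is_2cell \<beta> (t \<odot> h) h \<and>
                       \<beta> \<cdot> (i2 t \<star> \<beta>) = \<beta> \<cdot> (m \<star> i2 h) \<and> \<beta> \<cdot> (\<eta> \<star> i2 h) = i2 h}
     in \<lparr> cobj = Obs,
          carr = {((h1, \<beta>1), \<xi>, (h0, \<beta>0)). (h1, \<beta>1) \<in> Obs \<and> (h0, \<beta>0) \<in> Obs \<and>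
                    is_2cell \<xi> h1 h0 \<and> \<xi> \<cdot> \<beta>1 = \<beta>0 \<cdot> (i2 t \<star> \<xi>)},
          cdom = fst, ccod = (\<lambda>a. snd (snd a)),
          ccomp = (\<lambda>(ob1', \<xi>', ob0') (ob1, \<xi>, ob0). (ob1, \<xi>' \<cdot> \<xi>, ob0')),
          cid = (\<lambda>ob. (ob, i2 (fst ob), ob)) \<rparr>)"

text \<open>Comparison functors K (with K^H = Kfun p alpha, K^T = Kfun p gamma) from A(x,e).\<close>
definition Kfun :: "'a \<Rightarrow> 'c \<Rightarrow> ('a \<Rightarrow> 'a \<times> 'c) \<times> ('c \<Rightarrow> ('a \<times> 'c) \<times> 'c \<times> ('a \<times> 'c))" where
  "Kfun p \<beta> = ((\<lambda>g. (p \<odot> g, \<beta> \<star> i2 g)),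
               (\<lambda>\<chi>. ((p \<odot> s2 \<chi>, \<beta> \<star> i2 (s2 \<chi>)), i2 p \<star> \<chi>, (p \<odot> t2 \<chi>, \<beta> \<star> i2 (t2 \<chi>)))))"

text \<open>Precomposition with a 1-cell f : x' \<rightarrow> x, as a functor Desc(x) \<rightarrow> Desc(x')
  (resp. Alg(x) \<rightarrow> Alg(x')), and with a 2-cell theta : f \<Rightarrow> f', as the component at an
  object (h, beta) of the induced natural transformation.\<close>
definition precomp1 :: "'a \<Rightarrow> ('a \<times> 'c \<Rightarrow> 'a \<times> 'c) \<times>
    (('a \<times> 'c) \<times> 'c \<times> ('a \<times> 'c) \<Rightarrow> ('a \<times> 'c) \<times> 'c \<times> ('a \<times> 'c))" where
  "precomp1 f = ((\<lambda>(h, \<beta>). (h \<odot> f, \<beta> \<star> i2 f)),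
                 (\<lambda>((h1, \<beta>1), \<xi>, (h0, \<beta>0)). ((h1 \<odot> f, \<beta>1 \<star> i2 f), \<xi> \<star> i2 f, (h0 \<odot> f, \<beta>0 \<star> i2 f))))"

definition precomp2 :: "'c \<Rightarrow> 'a \<times> 'c \<Rightarrow> ('a \<times> 'c) \<times> 'c \<times> ('a \<times> 'c)" where
  "precomp2 \<theta> = (\<lambda>(h, \<beta>). ((h \<odot> s2 \<theta>, \<beta> \<star> i2 (s2 \<theta>)), i2 h \<star> \<theta>, (h \<odot> t2 \<theta>, \<beta> \<star> i2 (t2 \<theta>))))"

end

text \<open>Forgetful functor (h, beta) \<mapsto> h, xi \<mapsto> xi (same for U^H and U^T).\<close>
definition forget :: "('a \<times> 'c \<Rightarrow> 'a) \<times> (('a \<times> 'c) \<times> 'c \<times> ('a \<times> 'c) \<Rightarrow> 'c)" where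
  "forget = (fst, (\<lambda>a. fst (snd a)))"

end

theory Submission
  imports Defs
begin

text \<open>Let \<open>nu : b\<up>\<^sub>pb \<rightarrow> b\<close> classify the triple \<open>(id\<^sub>b, t, \<gamma>)\<close>, and let
  \<open>alpha_bar : \<delta>\<^sup>1 \<Rightarrow> \<delta>\<^sup>0t\<close> correspond to \<open>\<alpha>\<close> under the right Kan extension
  \<open>(\<delta>\<^sup>0t, \<delta>\<^sup>0\<gamma>)\<close>. Whiskering by \<open>nu\<close> sends a descent datum \<open>\<beta> : \<delta>\<^sup>1h \<Rightarrow> \<delta>\<^sup>0h\<close>
  to \<open>nu \<beta> : th \<Rightarrow> h\<close>, and \<open>\<beta> \<mapsto> \<delta>\<^sup>0\<beta> \<cdot> alpha_bar h\<close> goes back. Everything rests on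
  the images of \<open>alpha_bar\<close> under the structure 1-cells: \<open>nu alpha_bar = id\<^sub>t\<close>,
  \<open>s\<^sup>0 alpha_bar = \<eta>\<close>, and \<open>D\<^sup>1 alpha_bar\<close> is a composite of \<open>D\<^sup>0 alpha_bar t\<close>,
  \<open>D\<^sup>2 alpha_bar\<close> and \<open>D\<^sup>0\<delta>\<^sup>0m\<close>; so the cocycle condition on \<open>\<beta>\<close> corresponds to
  associativity of \<open>nu \<beta>\<close> and the normalisation condition to its unit law. Each of these
  identities is checked after transposing along a right Kan extension, where it reduces to the
  defining equations of \<open>m\<close>, \<open>\<eta>\<close> and of the cokernel diagram. Whiskering commutes with
  precomposition, so the isomorphisms are 2-natural.\<close>

lemma cat_iso_obj_surj:
  assumes "cat_iso C D F" "ob \<in> cobj D"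
  shows "\<exists>c\<in>cobj C. fst F c = ob"
proof -
  obtain G where G: "is_functor D C G" "fun_eq D (fcomp F G) (id, id)"
    using assms(1) unfolding cat_iso_def by blast
  have "fst G ob \<in> cobj C" using G(1) assms(2) unfolding is_functor_def by blast
  moreover have "fst F (fst G ob) = ob" using G(2) assms(2) unfolding fun_eq_def fcomp_def by auto
  ultimately show ?thesis by blast
qed

lemma cat_iso_arr_surj:
  assumes "cat_iso C D F" "a \<in> carr D" "c \<in> cobj C" "c' \<in> cobj C"
    "cdom D a = fst F c" "ccod D a = fst F c'"
  shows "\<exists>\<sigma>\<in>carr C. snd F \<sigma> = a \<and> cdom C \<sigma> = c \<and> ccod C \<sigma> = c'"
proof -
  obtain G where G: "is_functor D C G" "fun_eq D (fcomp F G) (id, id)" "fun_eq C (fcomp G F) (id, id)"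
    using assms(1) unfolding cat_iso_def by blast
  have "snd G a \<in> carr C" "cdom C (snd G a) = fst G (cdom D a)" "ccod C (snd G a) = fst G (ccod D a)"
    using G(1) assms(2) unfolding is_functor_def by blast+
  moreover have "snd F (snd G a) = a" using G(2) assms(2) unfolding fun_eq_def fcomp_def by auto
  moreover have "fst G (fst F c) = c" "fst G (fst F c') = c'"
    using G(3) assms(3,4) unfolding fun_eq_def fcomp_def by auto
  ultimately show ?thesis using assms(5,6) by metis
qed

definition lift_obj_map :: "('x \<Rightarrow> 'y) \<Rightarrow> ('x \<Rightarrow> 'y) \<times> ('x \<times> 'c \<times> 'x \<Rightarrow> 'y \<times> 'c \<times> 'y)" where
  "lift_obj_map \<phi> = (\<phi>, \<lambda>(o1, \<xi>, o0). (\<phi> o1, \<xi>, \<phi> o0))"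

lemma fun_eq_forget_lift_obj_map:
  assumes "\<And>ob. fst (\<phi> ob) = fst ob"
  shows "fun_eq C (fcomp forget (lift_obj_map \<phi>)) forget"
  using assms unfolding fun_eq_def fcomp_def forget_def lift_obj_map_def by (auto split: prod.split)

context TC
begin

definition vcomp_cat :: "('a \<times> 'y, ('a \<times> 'y) \<times> 'c \<times> ('a \<times> 'y)) cat \<Rightarrow> bool" where
  "vcomp_cat C \<longleftrightarrow>
     cdom C = fst \<and> ccod C = (\<lambda>a. snd (snd a)) \<and>
     ccomp C = (\<lambda>(ob1', \<xi>', ob0') (ob1, \<xi>, ob0). (ob1, \<xi>' \<cdot> \<xi>, ob0')) \<and>
     cid C = (\<lambda>ob. (ob, i2 (fst ob), ob)) \<and>
     (\<forall>a\<in>carr C. fst a \<in> cobj C \<and> snd (snd a) \<in> cobj C)"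

lemma is_functor_lift_obj_map:
  assumes "vcomp_cat C" "vcomp_cat D"
    and "\<And>ob. ob \<in> cobj C \<Longrightarrow> \<phi> ob \<in> cobj D \<and> fst (\<phi> ob) = fst ob"
    and "\<And>o1 \<xi> o0. (o1, \<xi>, o0) \<in> carr C \<Longrightarrow> (\<phi> o1, \<xi>, \<phi> o0) \<in> carr D"
  shows "is_functor C D (lift_obj_map \<phi>)"
  using assms unfolding is_functor_def vcomp_cat_def lift_obj_map_def
  by (auto split: prod.split)

lemma fun_eq_lift_obj_map_inverse:
  assumes "vcomp_cat C" "\<And>ob. ob \<in> cobj C \<Longrightarrow> \<psi> (\<phi> ob) = ob"
  shows "fun_eq C (fcomp (lift_obj_map \<psi>) (lift_obj_map \<phi>)) (id, id)"
  using assms unfolding fun_eq_def fcomp_def lift_obj_map_def vcomp_cat_def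
  by (auto simp: case_prod_beta prod_eq_iff)

lemma cat_iso_lift_obj_map:
  assumes C: "vcomp_cat C" and D: "vcomp_cat D"
    and \<phi>: "\<And>ob. ob \<in> cobj C \<Longrightarrow> \<phi> ob \<in> cobj D \<and> fst (\<phi> ob) = fst ob \<and> \<psi> (\<phi> ob) = ob"
    and \<psi>: "\<And>ob. ob \<in> cobj D \<Longrightarrow> \<psi> ob \<in> cobj C \<and> fst (\<psi> ob) = fst ob \<and> \<phi> (\<psi> ob) = ob"
    and \<phi>_arr: "\<And>o1 \<xi> o0. (o1, \<xi>, o0) \<in> carr C \<Longrightarrow> (\<phi> o1, \<xi>, \<phi> o0) \<in> carr D"
    and \<psi>_arr: "\<And>o1 \<xi> o0. (o1, \<xi>, o0) \<in> carr D \<Longrightarrow> (\<psi> o1, \<xi>, \<psi> o0) \<in> carr C"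
  shows "cat_iso C D (lift_obj_map \<phi>)"
  unfolding cat_iso_def
proof (intro conjI exI[of _ "lift_obj_map \<psi>"])
  show "is_functor C D (lift_obj_map \<phi>)"
    using is_functor_lift_obj_map[OF C D] \<phi> \<phi>_arr by blast
  show "is_functor D C (lift_obj_map \<psi>)"
    using is_functor_lift_obj_map[OF D C] \<psi> \<psi>_arr by blast
  show "fun_eq C (fcomp (lift_obj_map \<psi>) (lift_obj_map \<phi>)) (id, id)"
    using fun_eq_lift_obj_map_inverse[OF C] \<phi> by blast
  show "fun_eq D (fcomp (lift_obj_map \<phi>) (lift_obj_map \<psi>)) (id, id)"
    using fun_eq_lift_obj_map_inverse[OF D] \<psi> by blast
qed

end

context two_category
begin

lemma cell_simps:
  "\<lbrakk>f \<in> Ar1; g \<in> Ar1; t1 f = s1 g\<rbrakk> \<Longrightarrow> g \<odot> f \<in> Ar1"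
  "\<lbrakk>f \<in> Ar1; g \<in> Ar1; t1 f = s1 g\<rbrakk> \<Longrightarrow> s1 (g \<odot> f) = s1 f"
  "\<lbrakk>f \<in> Ar1; g \<in> Ar1; t1 f = s1 g\<rbrakk> \<Longrightarrow> t1 (g \<odot> f) = t1 g"
  "x \<in> Ob \<Longrightarrow> i1 x \<in> Ar1"
  "x \<in> Ob \<Longrightarrow> s1 (i1 x) = x"
  "x \<in> Ob \<Longrightarrow> t1 (i1 x) = x"
  "f \<in> Ar1 \<Longrightarrow> i2 f \<in> Ar2"
  "f \<in> Ar1 \<Longrightarrow> s2 (i2 f) = f"
  "f \<in> Ar1 \<Longrightarrow> t2 (i2 f) = f"
  "\<lbrakk>\<theta> \<in> Ar2; \<phi> \<in> Ar2; t2 \<theta> = s2 \<phi>\<rbrakk> \<Longrightarrow> \<phi> \<cdot> \<theta> \<in> Ar2"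
  "\<lbrakk>\<theta> \<in> Ar2; \<phi> \<in> Ar2; t2 \<theta> = s2 \<phi>\<rbrakk> \<Longrightarrow> s2 (\<phi> \<cdot> \<theta>) = s2 \<theta>"
  "\<lbrakk>\<theta> \<in> Ar2; \<phi> \<in> Ar2; t2 \<theta> = s2 \<phi>\<rbrakk> \<Longrightarrow> t2 (\<phi> \<cdot> \<theta>) = t2 \<phi>"
  "\<lbrakk>\<theta> \<in> Ar2; \<phi> \<in> Ar2; t1 (s2 \<theta>) = s1 (s2 \<phi>)\<rbrakk> \<Longrightarrow> \<phi> \<star> \<theta> \<in> Ar2"
  "\<lbrakk>\<theta> \<in> Ar2; \<phi> \<in> Ar2; t1 (s2 \<theta>) = s1 (s2 \<phi>)\<rbrakk> \<Longrightarrow> s2 (\<phi> \<star> \<theta>) = s2 \<phi> \<odot> s2 \<theta>"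
  "\<lbrakk>\<theta> \<in> Ar2; \<phi> \<in> Ar2; t1 (s2 \<theta>) = s1 (s2 \<phi>)\<rbrakk> \<Longrightarrow> t2 (\<phi> \<star> \<theta>) = t2 \<phi> \<odot> t2 \<theta>"
  "\<theta> \<in> Ar2 \<Longrightarrow> s2 \<theta> \<in> Ar1"
  "\<theta> \<in> Ar2 \<Longrightarrow> t2 \<theta> \<in> Ar1"
  "\<theta> \<in> Ar2 \<Longrightarrow> s1 (t2 \<theta>) = s1 (s2 \<theta>)"
  "\<theta> \<in> Ar2 \<Longrightarrow> t1 (t2 \<theta>) = t1 (s2 \<theta>)"
  "\<lbrakk>f \<in> Ar1; g \<in> Ar1; h \<in> Ar1; t1 f = s1 g; t1 g = s1 h\<rbrakk> \<Longrightarrow> (h \<odot> g) \<odot> f = h \<odot> (g \<odot> f)"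
  "\<lbrakk>f \<in> Ar1; t1 f = y\<rbrakk> \<Longrightarrow> i1 y \<odot> f = f"
  "\<lbrakk>f \<in> Ar1; s1 f = x\<rbrakk> \<Longrightarrow> f \<odot> i1 x = f"
  "\<lbrakk>\<theta> \<in> Ar2; t2 \<theta> = g\<rbrakk> \<Longrightarrow> i2 g \<cdot> \<theta> = \<theta>"
  "\<lbrakk>\<theta> \<in> Ar2; s2 \<theta> = f\<rbrakk> \<Longrightarrow> \<theta> \<cdot> i2 f = \<theta>"
  "\<lbrakk>\<theta> \<in> Ar2; t1 (s2 \<theta>) = y\<rbrakk> \<Longrightarrow> i2 (i1 y) \<star> \<theta> = \<theta>"
  "\<lbrakk>\<theta> \<in> Ar2; s1 (s2 \<theta>) = x\<rbrakk> \<Longrightarrow> \<theta> \<star> i2 (i1 x) = \<theta>"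
  "\<lbrakk>f \<in> Ar1; g \<in> Ar1; t1 f = s1 g\<rbrakk> \<Longrightarrow> i2 g \<star> i2 f = i2 (g \<odot> f)"
  using comp1_ar id1_ar id2_ar vcomp_ar hcomp_ar ar2_ends comp1_assoc comp1_idl comp1_idr
    vcomp_idl vcomp_idr hcomp_idl hcomp_idr hcomp_id2
  by auto

lemma comp1_eq_extend:
  "\<lbrakk>g \<odot> f = r; f \<in> Ar1; g \<in> Ar1; t1 f = s1 g; y \<in> Ar1; t1 y = s1 f\<rbrakk> \<Longrightarrow> g \<odot> (f \<odot> y) = r \<odot> y"
  by (metis comp1_assoc)

lemma whisker_left_vcomp:
  assumes "\<theta> \<in> Ar2" "\<phi> \<in> Ar2" "t2 \<theta> = s2 \<phi>" "h \<in> Ar1" "t1 (s2 \<theta>) = s1 h"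
  shows "i2 h \<star> (\<phi> \<cdot> \<theta>) = (i2 h \<star> \<phi>) \<cdot> (i2 h \<star> \<theta>)"
  using assms interchange[of \<theta> \<phi> "i2 h" "i2 h"] by (simp add: cell_simps)

lemma whisker_right_vcomp:
  assumes "\<theta> \<in> Ar2" "\<phi> \<in> Ar2" "t2 \<theta> = s2 \<phi>" "h \<in> Ar1" "t1 h = s1 (s2 \<theta>)"
  shows "(\<phi> \<cdot> \<theta>) \<star> i2 h = (\<phi> \<star> i2 h) \<cdot> (\<theta> \<star> i2 h)"
  using assms interchange[of "i2 h" "i2 h" \<theta> \<phi>] by (simp add: cell_simps)

lemma whisker_left_comp1:
  assumes "\<theta> \<in> Ar2" "f \<in> Ar1" "g \<in> Ar1" "t1 g = s1 f" "t1 (s2 \<theta>) = s1 g"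
  shows "i2 f \<star> (i2 g \<star> \<theta>) = i2 (f \<odot> g) \<star> \<theta>"
  using assms hcomp_assoc[of \<theta> "i2 g" "i2 f"] by (simp add: cell_simps)

lemma whisker_right_comp1:
  assumes "\<theta> \<in> Ar2" "f \<in> Ar1" "g \<in> Ar1" "t1 g = s1 f" "t1 f = s1 (s2 \<theta>)"
  shows "(\<theta> \<star> i2 f) \<star> i2 g = \<theta> \<star> i2 (f \<odot> g)"
  using assms hcomp_assoc[of "i2 g" "i2 f" \<theta>] by (simp add: cell_simps)

lemma whisker_left_right:
  assumes "\<theta> \<in> Ar2" "f \<in> Ar1" "g \<in> Ar1" "t1 g = s1 (s2 \<theta>)" "t1 (s2 \<theta>) = s1 f"
  shows "(i2 f \<star> \<theta>) \<star> i2 g = i2 f \<star> (\<theta> \<star> i2 g)"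
  using assms hcomp_assoc[of "i2 g" \<theta> "i2 f"] by (simp add: cell_simps)

lemma whisker_exchange:
  assumes "\<theta> \<in> Ar2" "\<phi> \<in> Ar2" "t1 (s2 \<theta>) = s1 (s2 \<phi>)"
  shows "(\<phi> \<star> i2 (t2 \<theta>)) \<cdot> (i2 (s2 \<phi>) \<star> \<theta>) = (i2 (t2 \<phi>) \<star> \<theta>) \<cdot> (\<phi> \<star> i2 (s2 \<theta>))"
proof -
  have "(\<phi> \<star> i2 (t2 \<theta>)) \<cdot> (i2 (s2 \<phi>) \<star> \<theta>) = (\<phi> \<cdot> i2 (s2 \<phi>)) \<star> (i2 (t2 \<theta>) \<cdot> \<theta>)"
    using assms by (intro interchange[symmetric]) (simp_all add: cell_simps)
  also have "\<dots> = (i2 (t2 \<phi>) \<cdot> \<phi>) \<star> (\<theta> \<cdot> i2 (s2 \<theta>))"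
    using assms by (simp add: cell_simps)
  also have "\<dots> = (i2 (t2 \<phi>) \<star> \<theta>) \<cdot> (\<phi> \<star> i2 (s2 \<theta>))"
    using assms by (intro interchange) (simp_all add: cell_simps)
  finally show ?thesis .
qed

end

locale codensity_descent = two_category A for A :: "('o,'a,'c) two_cat" +
  fixes e b B P :: 'o and p d0 d1 D0 D1 D2 s0 t :: 'a and \<alpha> \<gamma> m \<eta> :: 'c
  assumes cokernel: "is_cokernel_diagram e b p B d0 d1 \<alpha> P D0 D1 D2 s0"
    and d0_preserves_ran: "preserves_ran d0 p p t \<gamma>"
    and codensity: "is_codensity_monad b p t \<gamma> m \<eta>"
begin

lemma opcomma: "is_opcomma e b p B d0 d1 \<alpha>"
  using cokernel unfolding is_cokernel_diagram_def by blast

lemma pushout: "is_2pushout b B B d0 d1 P D2 D0"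
  using cokernel unfolding is_cokernel_diagram_def by blast

lemma ran: "is_ran p p t \<gamma>"
  using codensity unfolding is_codensity_monad_def by blast

lemma data_cells:
  "B \<in> Ob" "P \<in> Ob"
  "p \<in> Ar1" "s1 p = e" "t1 p = b"
  "d0 \<in> Ar1" "s1 d0 = b" "t1 d0 = B" "d1 \<in> Ar1" "s1 d1 = b" "t1 d1 = B"
  "D0 \<in> Ar1" "s1 D0 = B" "t1 D0 = P" "D1 \<in> Ar1" "s1 D1 = B" "t1 D1 = P"
  "D2 \<in> Ar1" "s1 D2 = B" "t1 D2 = P" "s0 \<in> Ar1" "s1 s0 = B" "t1 s0 = b"
  "t \<in> Ar1" "s1 t = b" "t1 t = b"
  "\<alpha> \<in> Ar2" "s2 \<alpha> = d1 \<odot> p" "t2 \<alpha> = d0 \<odot> p"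
  "\<gamma> \<in> Ar2" "s2 \<gamma> = t \<odot> p" "t2 \<gamma> = p"
  "m \<in> Ar2" "s2 m = t \<odot> t" "t2 m = t"
  "\<eta> \<in> Ar2" "s2 \<eta> = i1 b" "t2 \<eta> = t"
  using opcomma pushout cokernel codensity
  unfolding is_opcomma_def is_2pushout_def is_cokernel_diagram_def is_codensity_monad_def
    is_ran_def
  by auto

lemma objects: "e \<in> Ob" "b \<in> Ob"
  using ar1_ends data_cells by metis+

lemma cokernel_comp_eqs:
  "D2 \<odot> d0 = D0 \<odot> d1" "D1 \<odot> d1 = D2 \<odot> d1" "D1 \<odot> d0 = D0 \<odot> d0"
  "s0 \<odot> d0 = i1 b" "s0 \<odot> d1 = i1 b"
  using pushout cokernel unfolding is_2pushout_def is_cokernel_diagram_def by auto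

lemma D1_alpha: "i2 D1 \<star> \<alpha> = (i2 D0 \<star> \<alpha>) \<cdot> (i2 D2 \<star> \<alpha>)"
  and s0_alpha: "i2 s0 \<star> \<alpha> = i2 p"
  using cokernel unfolding is_cokernel_diagram_def by auto

lemma monad_mult: "\<gamma> \<cdot> (m \<star> i2 p) = \<gamma> \<cdot> (i2 t \<star> \<gamma>)"
  and monad_unit: "\<gamma> \<cdot> (\<eta> \<star> i2 p) = i2 p"
  using codensity unfolding is_codensity_monad_def by auto

lemmas cokernel_comp_eqs_extended =
  comp1_eq_extend[OF cokernel_comp_eqs(1)] comp1_eq_extend[OF cokernel_comp_eqs(2)]
  comp1_eq_extend[OF cokernel_comp_eqs(3)] comp1_eq_extend[OF cokernel_comp_eqs(4)]
  comp1_eq_extend[OF cokernel_comp_eqs(5)]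

lemma opcomma_iso: "y \<in> Ob \<Longrightarrow> cat_iso (homcat B y) (triples p b y) (opc_functor d0 d1 \<alpha>)"
  using opcomma unfolding is_opcomma_def by blast

lemma pushout_iso: "y \<in> Ob \<Longrightarrow> cat_iso (homcat P y) (cocones B B d0 d1 y) (po_functor D2 D0)"
  using pushout unfolding is_2pushout_def by blast

lemma gamma_cancel:
  assumes "is_1cell k b b" "is_2cell \<sigma> k t" "is_2cell \<tau> k t"
    and "\<gamma> \<cdot> (\<sigma> \<star> i2 p) = \<gamma> \<cdot> (\<tau> \<star> i2 p)"
  shows "\<sigma> = \<tau>"
proof -
  have "bij_betw (\<lambda>\<beta>. \<gamma> \<cdot> (\<beta> \<star> i2 p)) {\<beta>. is_2cell \<beta> k t} {\<theta>. is_2cell \<theta> (k \<odot> p) p}"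
    using ran assms(1) unfolding is_ran_def by (auto simp: data_cells)
  then show ?thesis using assms(2-4) unfolding bij_betw_def inj_on_def by blast
qed

lemma d0_gamma_transpose:
  assumes "is_1cell k b B" "is_2cell \<theta> (k \<odot> p) (d0 \<odot> p)"
  shows "\<exists>\<sigma>. is_2cell \<sigma> k (d0 \<odot> t) \<and> (i2 d0 \<star> \<gamma>) \<cdot> (\<sigma> \<star> i2 p) = \<theta>"
proof -
  have "bij_betw (\<lambda>\<beta>. (i2 d0 \<star> \<gamma>) \<cdot> (\<beta> \<star> i2 p))
      {\<beta>. is_2cell \<beta> k (d0 \<odot> t)} {\<theta>. is_2cell \<theta> (k \<odot> p) (d0 \<odot> p)}"
    using d0_preserves_ran assms(1) unfolding preserves_ran_def is_ran_def
    by (auto simp: data_cells cell_simps)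
  then have "\<theta> \<in> (\<lambda>\<beta>. (i2 d0 \<star> \<gamma>) \<cdot> (\<beta> \<star> i2 p)) ` {\<beta>. is_2cell \<beta> k (d0 \<odot> t)}"
    using assms(2) unfolding bij_betw_def by simp
  then show ?thesis by blast
qed

lemmas setting_simps = objects data_cells cell_simps cokernel_comp_eqs cokernel_comp_eqs_extended

definition nu :: 'a where
  "nu = (SOME k. is_1cell k B b \<and> k \<odot> d0 = i1 b \<and> k \<odot> d1 = t \<and> i2 k \<star> \<alpha> = \<gamma>)"

lemma nu: "nu \<in> Ar1" "s1 nu = B" "t1 nu = b" "nu \<odot> d0 = i1 b" "nu \<odot> d1 = t" "i2 nu \<star> \<alpha> = \<gamma>"
proof -
  have "(i1 b, t, \<gamma>) \<in> cobj (triples p b b)"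
    unfolding triples_def by (simp add: setting_simps)
  from cat_iso_obj_surj[OF opcomma_iso[OF objects(2)] this]
  have "\<exists>k. is_1cell k B b \<and> k \<odot> d0 = i1 b \<and> k \<odot> d1 = t \<and> i2 k \<star> \<alpha> = \<gamma>"
    unfolding homcat_def opc_functor_def by (auto simp: data_cells)
  from someI_ex[OF this] show
    "nu \<in> Ar1" "s1 nu = B" "t1 nu = b" "nu \<odot> d0 = i1 b" "nu \<odot> d1 = t" "i2 nu \<star> \<alpha> = \<gamma>"
    unfolding nu_def[symmetric] by auto
qed

definition alpha_bar :: 'c where
  "alpha_bar = (SOME \<sigma>. is_2cell \<sigma> d1 (d0 \<odot> t) \<and> (i2 d0 \<star> \<gamma>) \<cdot> (\<sigma> \<star> i2 p) = \<alpha>)"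

lemma alpha_bar: "alpha_bar \<in> Ar2" "s2 alpha_bar = d1" "t2 alpha_bar = d0 \<odot> t"
  "(i2 d0 \<star> \<gamma>) \<cdot> (alpha_bar \<star> i2 p) = \<alpha>"
proof -
  have "\<exists>\<sigma>. is_2cell \<sigma> d1 (d0 \<odot> t) \<and> (i2 d0 \<star> \<gamma>) \<cdot> (\<sigma> \<star> i2 p) = \<alpha>"
    by (rule d0_gamma_transpose) (simp_all add: data_cells)
  from someI_ex[OF this] show "alpha_bar \<in> Ar2" "s2 alpha_bar = d1" "t2 alpha_bar = d0 \<odot> t"
    "(i2 d0 \<star> \<gamma>) \<cdot> (alpha_bar \<star> i2 p) = \<alpha>"
    unfolding alpha_bar_def[symmetric] by auto
qed

lemmas setting_nu_simps = setting_simps nu(1-5) comp1_eq_extend[OF nu(4)] comp1_eq_extend[OF nu(5)]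
  alpha_bar(1-3)

lemma d0_nu_alpha: "i2 (d0 \<odot> nu) \<star> \<alpha> = i2 d0 \<star> \<gamma>"
  using whisker_left_comp1[of \<alpha> d0 nu] by (simp add: setting_nu_simps nu(6))

definition lam :: 'c where
  "lam = (SOME \<sigma>. is_2cell \<sigma> (i1 B) (d0 \<odot> nu) \<and> \<sigma> \<star> i2 d0 = i2 d0 \<and> \<sigma> \<star> i2 d1 = alpha_bar)"

lemma lam: "lam \<in> Ar2" "s2 lam = i1 B" "t2 lam = d0 \<odot> nu"
  "lam \<star> i2 d0 = i2 d0" "lam \<star> i2 d1 = alpha_bar"
proof -
  let ?a = "((d0, d1, \<alpha>), (i2 d0, alpha_bar), (d0, d0 \<odot> t, i2 d0 \<star> \<gamma>))"
  have "(i2 d0 \<star> i2 p) \<cdot> \<alpha> = \<alpha>" by (simp add: setting_nu_simps)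
  then have "?a \<in> carr (triples p b B)"
    unfolding triples_def by (simp add: setting_nu_simps alpha_bar(4))
  from cat_iso_arr_surj[OF opcomma_iso[OF data_cells(1)] this, of "i1 B" "d0 \<odot> nu"]
  have "\<exists>\<sigma>. is_2cell \<sigma> (i1 B) (d0 \<odot> nu) \<and> \<sigma> \<star> i2 d0 = i2 d0 \<and> \<sigma> \<star> i2 d1 = alpha_bar"
    unfolding homcat_def opc_functor_def triples_def by (auto simp: setting_nu_simps d0_nu_alpha)
  from someI_ex[OF this] show "lam \<in> Ar2" "s2 lam = i1 B" "t2 lam = d0 \<odot> nu"
    "lam \<star> i2 d0 = i2 d0" "lam \<star> i2 d1 = alpha_bar"
    unfolding lam_def[symmetric] by auto
qed

definition q :: 'a where
  "q = (SOME k. is_1cell k P b \<and> k \<odot> D2 = t \<odot> nu \<and> k \<odot> D0 = nu)"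

lemma q: "q \<in> Ar1" "s1 q = P" "t1 q = b" "q \<odot> D2 = t \<odot> nu" "q \<odot> D0 = nu"
proof -
  have "(t \<odot> nu, nu) \<in> cobj (cocones B B d0 d1 b)"
    unfolding cocones_def by (simp add: setting_nu_simps)
  from cat_iso_obj_surj[OF pushout_iso[OF objects(2)] this]
  have "\<exists>k. is_1cell k P b \<and> k \<odot> D2 = t \<odot> nu \<and> k \<odot> D0 = nu"
    unfolding homcat_def po_functor_def by (auto simp: data_cells)
  from someI_ex[OF this] show "q \<in> Ar1" "s1 q = P" "t1 q = b" "q \<odot> D2 = t \<odot> nu" "q \<odot> D0 = nu"
    unfolding q_def[symmetric] by auto
qed

lemmas setting_nu_q_simps = setting_nu_simps q comp1_eq_extend[OF q(4)] comp1_eq_extend[OF q(5)] lam(1-3)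

definition u :: 'c where
  "u = (SOME \<sigma>. is_2cell \<sigma> (i1 P) (D0 \<odot> (d0 \<odot> q)) \<and> \<sigma> \<star> i2 D0 = i2 D0 \<star> lam)"

lemma u: "u \<in> Ar2" "s2 u = i1 P" "t2 u = D0 \<odot> (d0 \<odot> q)" "u \<star> i2 D0 = i2 D0 \<star> lam"
proof -
  define u0 where "u0 = ((i2 D0 \<star> alpha_bar) \<star> i2 nu) \<cdot> (i2 D2 \<star> lam)"
  define u1 where "u1 = i2 D0 \<star> lam"
  have "u0 \<star> i2 d0 = (((i2 D0 \<star> alpha_bar) \<star> i2 nu) \<star> i2 d0) \<cdot> ((i2 D2 \<star> lam) \<star> i2 d0)"
    unfolding u0_def by (rule whisker_right_vcomp) (simp_all add: setting_nu_q_simps)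
  also have "\<dots> = i2 D0 \<star> alpha_bar"
    using whisker_right_comp1[of "i2 D0 \<star> alpha_bar" nu d0] whisker_left_right[of lam D2 d0]
    by (simp add: setting_nu_q_simps lam)
  also have "\<dots> = u1 \<star> i2 d1"
    unfolding u1_def using whisker_left_right[of lam D0 d1] by (simp add: setting_nu_q_simps lam)
  finally have "((D2, D0), (u0, u1), (D0 \<odot> (d0 \<odot> (t \<odot> nu)), D0 \<odot> (d0 \<odot> nu)))
      \<in> carr (cocones B B d0 d1 P)"
    unfolding cocones_def by (simp add: setting_nu_q_simps u0_def u1_def)
  from cat_iso_arr_surj[OF pushout_iso[OF data_cells(2)] this, of "i1 P" "D0 \<odot> (d0 \<odot> q)"]
  have "\<exists>\<sigma>. is_2cell \<sigma> (i1 P) (D0 \<odot> (d0 \<odot> q)) \<and> \<sigma> \<star> i2 D0 = i2 D0 \<star> lam"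
    unfolding homcat_def po_functor_def cocones_def u1_def by (auto simp: setting_nu_q_simps)
  from someI_ex[OF this] show "u \<in> Ar2" "s2 u = i1 P" "t2 u = D0 \<odot> (d0 \<odot> q)"
    "u \<star> i2 D0 = i2 D0 \<star> lam"
    unfolding u_def[symmetric] by auto
qed

lemmas cells = setting_nu_q_simps u(1-3)

lemma whisker_alpha_bar_transpose:
  assumes "is_1cell k B b" "k \<odot> d0 = i1 b"
  shows "\<gamma> \<cdot> ((i2 k \<star> alpha_bar) \<star> i2 p) = i2 k \<star> \<alpha>"
proof -
  have "\<gamma> \<cdot> ((i2 k \<star> alpha_bar) \<star> i2 p) = (i2 k \<star> (i2 d0 \<star> \<gamma>)) \<cdot> (i2 k \<star> (alpha_bar \<star> i2 p))"
    using assms whisker_left_comp1[of \<gamma> k d0] whisker_left_right[of alpha_bar k p]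
    by (simp add: cells)
  also have "\<dots> = i2 k \<star> \<alpha>"
    using assms whisker_left_vcomp[of "alpha_bar \<star> i2 p" "i2 d0 \<star> \<gamma>" k]
    by (simp add: cells alpha_bar(4))
  finally show ?thesis .
qed

lemma nu_alpha_bar: "i2 nu \<star> alpha_bar = i2 t"
  by (rule gamma_cancel[of t])
    (use whisker_alpha_bar_transpose[of nu] in \<open>simp_all add: cells nu(6)\<close>)

lemma s0_alpha_bar: "i2 s0 \<star> alpha_bar = \<eta>"
  by (rule gamma_cancel[of "i1 b"])
    (use whisker_alpha_bar_transpose[of s0] in \<open>simp_all add: cells s0_alpha monad_unit\<close>)

lemma q_D1_alpha: "i2 (q \<odot> D1) \<star> \<alpha> = \<gamma> \<cdot> (m \<star> i2 p)"
proof -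
  have "i2 (q \<odot> D1) \<star> \<alpha> = i2 q \<star> ((i2 D0 \<star> \<alpha>) \<cdot> (i2 D2 \<star> \<alpha>))"
    using whisker_left_comp1[of \<alpha> q D1] by (simp add: cells D1_alpha)
  also have "\<dots> = (i2 q \<star> (i2 D0 \<star> \<alpha>)) \<cdot> (i2 q \<star> (i2 D2 \<star> \<alpha>))"
    by (rule whisker_left_vcomp) (simp_all add: cells)
  also have "\<dots> = \<gamma> \<cdot> (i2 t \<star> \<gamma>)"
    using whisker_left_comp1[of \<alpha> q D0] whisker_left_comp1[of \<alpha> q D2]
      whisker_left_comp1[of \<alpha> t nu]
    by (simp add: cells nu(6))
  finally show ?thesis by (simp add: monad_mult)
qed

lemma q_D1_alpha_bar: "i2 (q \<odot> D1) \<star> alpha_bar = m"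
  by (rule gamma_cancel[of "t \<odot> t"])
    (use whisker_alpha_bar_transpose[of "q \<odot> D1"] q_D1_alpha in \<open>simp_all add: cells\<close>)

text \<open>\<open>D\<^sup>0\<delta>\<^sup>0\<gamma>\<close> need not be a right Kan extension; but \<open>q\<close> transports it back to \<open>\<gamma>\<close>
  and \<open>u\<close> recovers a 2-cell into \<open>D\<^sup>0\<delta>\<^sup>0t\<close> from its image under \<open>q\<close>, which yields the
  cancellation law \<open>D0_d0_gamma_cancel\<close>.\<close>

lemma q_whisker_transpose:
  assumes "is_1cell k b P" "is_2cell \<sigma> k (D0 \<odot> (d0 \<odot> t))"
  shows "\<gamma> \<cdot> ((i2 q \<star> \<sigma>) \<star> i2 p) = i2 q \<star> ((i2 (D0 \<odot> d0) \<star> \<gamma>) \<cdot> (\<sigma> \<star> i2 p))"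
proof -
  have "i2 q \<star> ((i2 (D0 \<odot> d0) \<star> \<gamma>) \<cdot> (\<sigma> \<star> i2 p))
      = (i2 q \<star> (i2 (D0 \<odot> d0) \<star> \<gamma>)) \<cdot> (i2 q \<star> (\<sigma> \<star> i2 p))"
    using assms by (intro whisker_left_vcomp) (simp_all add: cells)
  then show ?thesis
    using assms whisker_left_comp1[of \<gamma> q "D0 \<odot> d0"] whisker_left_right[of \<sigma> q p]
    by (simp add: cells)
qed

lemma u_factorization:
  assumes "is_1cell k b P" "is_2cell \<sigma> k (D0 \<odot> (d0 \<odot> t))"
  shows "\<sigma> = (i2 (D0 \<odot> d0) \<star> (i2 q \<star> \<sigma>)) \<cdot> (u \<star> i2 k)"
proof -
  have "u \<star> i2 (D0 \<odot> (d0 \<odot> t)) = ((u \<star> i2 D0) \<star> i2 d0) \<star> i2 t"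
    using whisker_right_comp1[of u D0 d0] whisker_right_comp1[of "u \<star> i2 D0" d0 t]
      whisker_right_comp1[of u D0 "d0 \<odot> t"] whisker_right_comp1[of u d0 t]
    by (simp add: cells)
  also have "\<dots> = i2 (D0 \<odot> (d0 \<odot> t))"
    unfolding u(4) using whisker_left_right[of lam D0 d0] by (simp add: cells lam)
  finally have "u \<star> i2 (D0 \<odot> (d0 \<odot> t)) = i2 (D0 \<odot> (d0 \<odot> t))" .
  then show ?thesis
    using assms whisker_exchange[of \<sigma> u] whisker_left_comp1[of \<sigma> "D0 \<odot> d0" q]
    by (simp add: cells)
qed

lemma D0_d0_gamma_cancel:
  assumes "is_1cell k b P" "is_2cell \<sigma> k (D0 \<odot> (d0 \<odot> t))" "is_2cell \<tau> k (D0 \<odot> (d0 \<odot> t))"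
    and "(i2 (D0 \<odot> d0) \<star> \<gamma>) \<cdot> (\<sigma> \<star> i2 p) = (i2 (D0 \<odot> d0) \<star> \<gamma>) \<cdot> (\<tau> \<star> i2 p)"
  shows "\<sigma> = \<tau>"
proof -
  have "i2 q \<star> \<sigma> = i2 q \<star> \<tau>"
    by (rule gamma_cancel[of "q \<odot> k"])
      (use assms q_whisker_transpose[of k \<sigma>] q_whisker_transpose[of k \<tau>] in \<open>simp_all add: cells\<close>)
  then show ?thesis using u_factorization[of k \<sigma>] u_factorization[of k \<tau>] assms by simp
qed

lemma whisker_alpha_transpose:
  assumes "is_1cell k B y"
  shows "(i2 k \<star> (i2 d0 \<star> \<gamma>)) \<cdot> (i2 k \<star> (alpha_bar \<star> i2 p)) = i2 k \<star> \<alpha>"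
  using assms whisker_left_vcomp[of "alpha_bar \<star> i2 p" "i2 d0 \<star> \<gamma>" k]
  by (simp add: cells alpha_bar(4))

lemma D0_d0_gamma_mult:
  "(i2 (D0 \<odot> d0) \<star> \<gamma>) \<cdot> (i2 (D0 \<odot> d0) \<star> (m \<star> i2 p))
     = (i2 (D0 \<odot> d0) \<star> \<gamma>) \<cdot> (i2 D0 \<star> (i2 (d0 \<odot> t) \<star> \<gamma>))"
proof -
  have "(i2 (D0 \<odot> d0) \<star> \<gamma>) \<cdot> (i2 (D0 \<odot> d0) \<star> (m \<star> i2 p)) = i2 (D0 \<odot> d0) \<star> (\<gamma> \<cdot> (m \<star> i2 p))"
    by (rule whisker_left_vcomp[symmetric]) (simp_all add: cells)
  also have "\<dots> = i2 (D0 \<odot> d0) \<star> (\<gamma> \<cdot> (i2 t \<star> \<gamma>))" by (simp add: monad_mult)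
  also have "\<dots> = (i2 (D0 \<odot> d0) \<star> \<gamma>) \<cdot> (i2 (D0 \<odot> d0) \<star> (i2 t \<star> \<gamma>))"
    by (rule whisker_left_vcomp) (simp_all add: cells)
  finally show ?thesis
    using whisker_left_comp1[of \<gamma> "D0 \<odot> d0" t] whisker_left_comp1[of \<gamma> D0 "d0 \<odot> t"]
    by (simp add: cells)
qed

lemma D0_alpha_bar_gamma_exchange:
  "(i2 D0 \<star> (i2 (d0 \<odot> t) \<star> \<gamma>)) \<cdot> (i2 D0 \<star> (alpha_bar \<star> i2 (t \<odot> p)))
     = (i2 D0 \<star> (alpha_bar \<star> i2 p)) \<cdot> (i2 D2 \<star> (i2 d0 \<star> \<gamma>))"
proof -
  have "(i2 D0 \<star> (i2 (d0 \<odot> t) \<star> \<gamma>)) \<cdot> (i2 D0 \<star> (alpha_bar \<star> i2 (t \<odot> p)))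
      = i2 D0 \<star> ((i2 (d0 \<odot> t) \<star> \<gamma>) \<cdot> (alpha_bar \<star> i2 (t \<odot> p)))"
    by (rule whisker_left_vcomp[symmetric]) (simp_all add: cells)
  also have "\<dots> = i2 D0 \<star> ((alpha_bar \<star> i2 p) \<cdot> (i2 d1 \<star> \<gamma>))"
    using whisker_exchange[of \<gamma> alpha_bar] by (simp add: cells)
  also have "\<dots> = (i2 D0 \<star> (alpha_bar \<star> i2 p)) \<cdot> (i2 D0 \<star> (i2 d1 \<star> \<gamma>))"
    by (rule whisker_left_vcomp) (simp_all add: cells)
  finally show ?thesis
    using whisker_left_comp1[of \<gamma> D0 d1] whisker_left_comp1[of \<gamma> D2 d0] by (simp add: cells)
qed

definition mult_alpha_bar :: 'c where
  "mult_alpha_bar = (i2 (D0 \<odot> d0) \<star> m) \<cdot> (((i2 D0 \<star> alpha_bar) \<star> i2 t) \<cdot> (i2 D2 \<star> alpha_bar))"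

lemma mult_alpha_bar_whisker:
  assumes "h \<in> Ar1" "t1 h = b"
  shows "mult_alpha_bar \<star> i2 h = (i2 (D0 \<odot> d0) \<star> (m \<star> i2 h)) \<cdot>
    ((i2 D0 \<star> (alpha_bar \<star> i2 (t \<odot> h))) \<cdot> (i2 D2 \<star> (alpha_bar \<star> i2 h)))"
  using assms unfolding mult_alpha_bar_def
  using whisker_right_vcomp[of "((i2 D0 \<star> alpha_bar) \<star> i2 t) \<cdot> (i2 D2 \<star> alpha_bar)"
      "i2 (D0 \<odot> d0) \<star> m" h]
    whisker_right_vcomp[of "i2 D2 \<star> alpha_bar" "(i2 D0 \<star> alpha_bar) \<star> i2 t" h]
    whisker_left_right[of m "D0 \<odot> d0" h] whisker_left_right[of alpha_bar D2 h]
    whisker_right_comp1[of "i2 D0 \<star> alpha_bar" t h] whisker_left_right[of alpha_bar D0 "t \<odot> h"]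
  by (simp add: cells)

lemma D1_alpha_bar: "i2 D1 \<star> alpha_bar = mult_alpha_bar"
proof (rule D0_d0_gamma_cancel[of "D2 \<odot> d1"])
  let ?g = "i2 (D0 \<odot> d0) \<star> \<gamma>"
  have g: "?g = i2 X \<star> (i2 d0 \<star> \<gamma>)" if "is_1cell X B P" "X \<odot> d0 = D0 \<odot> d0" for X
    using that whisker_left_comp1[of \<gamma> X d0] by (simp add: cells)
  have "?g \<cdot> ((i2 D1 \<star> alpha_bar) \<star> i2 p) = i2 D1 \<star> \<alpha>"
    using whisker_alpha_transpose[of D1] whisker_left_right[of alpha_bar D1 p] g[of D1]
    by (simp add: cells)
  moreover have "?g \<cdot> (mult_alpha_bar \<star> i2 p) = i2 D1 \<star> \<alpha>"
  proof -
    let ?A1 = "i2 (D0 \<odot> d0) \<star> (m \<star> i2 p)"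
    let ?A2 = "i2 D0 \<star> (alpha_bar \<star> i2 (t \<odot> p))"
    let ?A3 = "i2 D2 \<star> (alpha_bar \<star> i2 p)"
    let ?B = "i2 D0 \<star> (i2 (d0 \<odot> t) \<star> \<gamma>)"
    let ?C1 = "i2 D0 \<star> (alpha_bar \<star> i2 p)"
    let ?C2 = "i2 D2 \<star> (i2 d0 \<star> \<gamma>)"
    have "?g \<cdot> (mult_alpha_bar \<star> i2 p) = (?g \<cdot> ?A1) \<cdot> (?A2 \<cdot> ?A3)"
      by (simp add: mult_alpha_bar_whisker cells vcomp_assoc)
    also have "\<dots> = ?g \<cdot> ((?B \<cdot> ?A2) \<cdot> ?A3)"
      by (simp add: D0_d0_gamma_mult cells vcomp_assoc)
    also have "\<dots> = (?g \<cdot> ?C1) \<cdot> (?C2 \<cdot> ?A3)"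
      by (simp add: D0_alpha_bar_gamma_exchange cells vcomp_assoc)
    also have "\<dots> = (i2 D0 \<star> \<alpha>) \<cdot> (i2 D2 \<star> \<alpha>)"
      using whisker_alpha_transpose[of D0] whisker_alpha_transpose[of D2] g[of D0]
      by (simp add: cells)
    finally show ?thesis by (simp add: D1_alpha)
  qed
  ultimately show "?g \<cdot> ((i2 D1 \<star> alpha_bar) \<star> i2 p) = ?g \<cdot> (mult_alpha_bar \<star> i2 p)" by simp
qed (simp_all add: cells mult_alpha_bar_def)

lemma descent_from_nu:
  assumes h: "is_1cell h x b" and \<beta>: "is_2cell \<beta> (d1 \<odot> h) (d0 \<odot> h)"
  shows "(i2 d0 \<star> (i2 nu \<star> \<beta>)) \<cdot> (alpha_bar \<star> i2 h) = \<beta>"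
proof -
  have "(i2 (d0 \<odot> nu) \<star> \<beta>) \<cdot> (lam \<star> i2 (d1 \<odot> h)) = (lam \<star> i2 (d0 \<odot> h)) \<cdot> (i2 (i1 B) \<star> \<beta>)"
    using whisker_exchange[of \<beta> lam] h \<beta> by (simp add: cells)
  then show ?thesis
    using h \<beta> whisker_left_comp1[of \<beta> d0 nu] whisker_right_comp1[of lam d0 h]
      whisker_right_comp1[of lam d1 h]
    by (simp add: cells lam)
qed

lemma nu_descent_unit:
  assumes h: "is_1cell h x b" and \<beta>: "is_2cell \<beta> (d1 \<odot> h) (d0 \<odot> h)"
    and normal: "i2 s0 \<star> \<beta> = i2 h"
  shows "(i2 nu \<star> \<beta>) \<cdot> (\<eta> \<star> i2 h) = i2 h"
proof -
  have "i2 h = i2 s0 \<star> ((i2 d0 \<star> (i2 nu \<star> \<beta>)) \<cdot> (alpha_bar \<star> i2 h))"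
    using normal descent_from_nu[OF h \<beta>] by simp
  also have "\<dots> = (i2 s0 \<star> (i2 d0 \<star> (i2 nu \<star> \<beta>))) \<cdot> (i2 s0 \<star> (alpha_bar \<star> i2 h))"
    by (rule whisker_left_vcomp) (use h \<beta> in \<open>simp_all add: cells\<close>)
  finally show ?thesis
    using h \<beta> whisker_left_comp1[of "i2 nu \<star> \<beta>" s0 d0] whisker_left_right[of alpha_bar s0 h]
    by (simp add: cells s0_alpha_bar)
qed

lemma nu_descent_assoc:
  assumes h: "is_1cell h x b" and \<beta>: "is_2cell \<beta> (d1 \<odot> h) (d0 \<odot> h)"
    and cocycle: "(i2 D0 \<star> \<beta>) \<cdot> (i2 D2 \<star> \<beta>) = i2 D1 \<star> \<beta>"
  shows "(i2 nu \<star> \<beta>) \<cdot> (i2 t \<star> (i2 nu \<star> \<beta>)) = (i2 nu \<star> \<beta>) \<cdot> (m \<star> i2 h)"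
proof -
  have "(i2 nu \<star> \<beta>) \<cdot> (i2 t \<star> (i2 nu \<star> \<beta>)) = i2 q \<star> ((i2 D0 \<star> \<beta>) \<cdot> (i2 D2 \<star> \<beta>))"
    using h \<beta> whisker_left_vcomp[of "i2 D2 \<star> \<beta>" "i2 D0 \<star> \<beta>" q]
      whisker_left_comp1[of \<beta> q D0] whisker_left_comp1[of \<beta> q D2] whisker_left_comp1[of \<beta> t nu]
    by (simp add: cells)
  also have "\<dots> = i2 (q \<odot> D1) \<star> ((i2 d0 \<star> (i2 nu \<star> \<beta>)) \<cdot> (alpha_bar \<star> i2 h))"
    using h \<beta> whisker_left_comp1[of \<beta> q D1] by (simp add: cocycle descent_from_nu cells)
  also have "\<dots> = (i2 (q \<odot> D1) \<star> (i2 d0 \<star> (i2 nu \<star> \<beta>))) \<cdot> (i2 (q \<odot> D1) \<star> (alpha_bar \<star> i2 h))"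
    by (rule whisker_left_vcomp) (use h \<beta> in \<open>simp_all add: cells\<close>)
  finally show ?thesis
    using h \<beta> whisker_left_comp1[of "i2 nu \<star> \<beta>" "q \<odot> D1" d0]
      whisker_left_right[of alpha_bar "q \<odot> D1" h]
    by (simp add: cells q_D1_alpha_bar)
qed

definition descent_of :: "'a \<Rightarrow> 'c \<Rightarrow> 'c" where
  "descent_of h \<beta> = (i2 d0 \<star> \<beta>) \<cdot> (alpha_bar \<star> i2 h)"

lemma descent_of_cell:
  assumes "is_1cell h x b" "is_2cell \<beta> (t \<odot> h) h"
  shows "is_2cell (descent_of h \<beta>) (d1 \<odot> h) (d0 \<odot> h)"
  using assms unfolding descent_of_def by (simp add: cells)

lemma nu_descent_of:
  assumes h: "is_1cell h x b" and \<beta>: "is_2cell \<beta> (t \<odot> h) h"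
  shows "i2 nu \<star> descent_of h \<beta> = \<beta>"
proof -
  have "i2 nu \<star> descent_of h \<beta> = (i2 nu \<star> (i2 d0 \<star> \<beta>)) \<cdot> (i2 nu \<star> (alpha_bar \<star> i2 h))"
    unfolding descent_of_def by (rule whisker_left_vcomp) (use h \<beta> in \<open>simp_all add: cells\<close>)
  then show ?thesis
    using h \<beta> whisker_left_comp1[of \<beta> nu d0] whisker_left_right[of alpha_bar nu h, symmetric]
    by (simp add: cells nu_alpha_bar)
qed

lemma descent_of_normal:
  assumes h: "is_1cell h x b" and \<beta>: "is_2cell \<beta> (t \<odot> h) h"
    and unit: "\<beta> \<cdot> (\<eta> \<star> i2 h) = i2 h"
  shows "i2 s0 \<star> descent_of h \<beta> = i2 h"
proof -
  have "i2 s0 \<star> descent_of h \<beta> = (i2 s0 \<star> (i2 d0 \<star> \<beta>)) \<cdot> (i2 s0 \<star> (alpha_bar \<star> i2 h))"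
    unfolding descent_of_def by (rule whisker_left_vcomp) (use h \<beta> in \<open>simp_all add: cells\<close>)
  then show ?thesis
    using h \<beta> unit whisker_left_comp1[of \<beta> s0 d0] whisker_left_right[of alpha_bar s0 h]
    by (simp add: cells s0_alpha_bar)
qed

lemma D1_descent_of:
  assumes h: "is_1cell h x b" and \<beta>: "is_2cell \<beta> (t \<odot> h) h"
  shows "i2 D1 \<star> descent_of h \<beta> = (i2 (D0 \<odot> d0) \<star> \<beta>) \<cdot> ((i2 (D0 \<odot> d0) \<star> (m \<star> i2 h)) \<cdot>
    ((i2 D0 \<star> (alpha_bar \<star> i2 (t \<odot> h))) \<cdot> (i2 D2 \<star> (alpha_bar \<star> i2 h))))"
proof -
  have "i2 D1 \<star> descent_of h \<beta> = (i2 D1 \<star> (i2 d0 \<star> \<beta>)) \<cdot> (i2 D1 \<star> (alpha_bar \<star> i2 h))"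
    unfolding descent_of_def by (rule whisker_left_vcomp) (use h \<beta> in \<open>simp_all add: cells\<close>)
  also have "i2 D1 \<star> (alpha_bar \<star> i2 h) = mult_alpha_bar \<star> i2 h"
    using h whisker_left_right[of alpha_bar D1 h] by (simp add: cells D1_alpha_bar)
  finally show ?thesis
    using h \<beta> whisker_left_comp1[of \<beta> D1 d0] by (simp add: cells mult_alpha_bar_whisker)
qed

lemma D0_alpha_bar_exchange:
  assumes h: "is_1cell h x b" and \<beta>: "is_2cell \<beta> (t \<odot> h) h"
  shows "(i2 D0 \<star> (alpha_bar \<star> i2 h)) \<cdot> (i2 D0 \<star> (i2 d1 \<star> \<beta>))
    = (i2 D0 \<star> (i2 (d0 \<odot> t) \<star> \<beta>)) \<cdot> (i2 D0 \<star> (alpha_bar \<star> i2 (t \<odot> h)))"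
proof -
  have "(alpha_bar \<star> i2 h) \<cdot> (i2 d1 \<star> \<beta>) = (i2 (d0 \<odot> t) \<star> \<beta>) \<cdot> (alpha_bar \<star> i2 (t \<odot> h))"
    using h \<beta> whisker_exchange[of \<beta> alpha_bar] by (simp add: cells)
  then show ?thesis
    using h \<beta> whisker_left_vcomp[of "i2 d1 \<star> \<beta>" "alpha_bar \<star> i2 h" D0]
      whisker_left_vcomp[of "alpha_bar \<star> i2 (t \<odot> h)" "i2 (d0 \<odot> t) \<star> \<beta>" D0]
    by (simp add: cells)
qed

lemma descent_of_cocycle:
  assumes h: "is_1cell h x b" and \<beta>: "is_2cell \<beta> (t \<odot> h) h"
    and assoc: "\<beta> \<cdot> (i2 t \<star> \<beta>) = \<beta> \<cdot> (m \<star> i2 h)"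
  shows "(i2 D0 \<star> descent_of h \<beta>) \<cdot> (i2 D2 \<star> descent_of h \<beta>) = i2 D1 \<star> descent_of h \<beta>"
proof -
  let ?E0 = "i2 (D0 \<odot> d0) \<star> \<beta>"
  let ?Ea = "i2 D0 \<star> (alpha_bar \<star> i2 (t \<odot> h))"
  let ?Eb = "i2 D2 \<star> (alpha_bar \<star> i2 h)"
  let ?Ec = "i2 D0 \<star> (alpha_bar \<star> i2 h)"
  let ?Ed = "i2 D0 \<star> (i2 d1 \<star> \<beta>)"
  let ?Et = "i2 D0 \<star> (i2 (d0 \<odot> t) \<star> \<beta>)"
  have exchange: "?Ec \<cdot> ?Ed = ?Et \<cdot> ?Ea"
    using D0_alpha_bar_exchange[OF h \<beta>] .
  have mult: "?E0 \<cdot> ?Et = ?E0 \<cdot> (i2 (D0 \<odot> d0) \<star> (m \<star> i2 h))"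
  proof -
    have "?E0 \<cdot> ?Et = i2 (D0 \<odot> d0) \<star> (\<beta> \<cdot> (i2 t \<star> \<beta>))"
      using h \<beta> whisker_left_comp1[of \<beta> "D0 \<odot> d0" t] whisker_left_comp1[of \<beta> D0 "d0 \<odot> t"]
        whisker_left_vcomp[of "i2 t \<star> \<beta>" \<beta> "D0 \<odot> d0"]
      by (simp add: cells)
    then show ?thesis
      using h \<beta> whisker_left_vcomp[of "m \<star> i2 h" \<beta> "D0 \<odot> d0"] by (simp add: cells assoc)
  qed
  have "(i2 D0 \<star> descent_of h \<beta>) \<cdot> (i2 D2 \<star> descent_of h \<beta>) = ?E0 \<cdot> ((?Ec \<cdot> ?Ed) \<cdot> ?Eb)"
    using h \<beta> whisker_left_vcomp[of "alpha_bar \<star> i2 h" "i2 d0 \<star> \<beta>" D0]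
      whisker_left_vcomp[of "alpha_bar \<star> i2 h" "i2 d0 \<star> \<beta>" D2]
      whisker_left_comp1[of \<beta> D0 d0] whisker_left_comp1[of \<beta> D2 d0] whisker_left_comp1[of \<beta> D0 d1]
    unfolding descent_of_def by (simp add: cells vcomp_assoc)
  also have "\<dots> = (?E0 \<cdot> ?Et) \<cdot> (?Ea \<cdot> ?Eb)"
    using h \<beta> by (simp add: exchange cells vcomp_assoc)
  also have "\<dots> = i2 D1 \<star> descent_of h \<beta>"
    using h \<beta> by (simp add: mult D1_descent_of cells vcomp_assoc)
  finally show ?thesis .
qed

lemma nu_descent_morphism:
  assumes h1: "is_1cell h1 x b" and h0: "is_1cell h0 x b"
    and \<beta>1: "is_2cell \<beta>1 (d1 \<odot> h1) (d0 \<odot> h1)" and \<beta>0: "is_2cell \<beta>0 (d1 \<odot> h0) (d0 \<odot> h0)"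
    and \<xi>: "is_2cell \<xi> h1 h0" and mor: "\<beta>0 \<cdot> (i2 d1 \<star> \<xi>) = (i2 d0 \<star> \<xi>) \<cdot> \<beta>1"
  shows "\<xi> \<cdot> (i2 nu \<star> \<beta>1) = (i2 nu \<star> \<beta>0) \<cdot> (i2 t \<star> \<xi>)"
proof -
  have "i2 nu \<star> (\<beta>0 \<cdot> (i2 d1 \<star> \<xi>)) = i2 nu \<star> ((i2 d0 \<star> \<xi>) \<cdot> \<beta>1)"
    by (simp add: mor)
  then show ?thesis
    using h1 h0 \<beta>1 \<beta>0 \<xi> whisker_left_vcomp[of "i2 d1 \<star> \<xi>" \<beta>0 nu]
      whisker_left_vcomp[of \<beta>1 "i2 d0 \<star> \<xi>" nu]
      whisker_left_comp1[of \<xi> nu d1] whisker_left_comp1[of \<xi> nu d0]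
    by (simp add: cells)
qed

lemma descent_of_morphism:
  assumes h1: "is_1cell h1 x b" and h0: "is_1cell h0 x b"
    and \<beta>1: "is_2cell \<beta>1 (t \<odot> h1) h1" and \<beta>0: "is_2cell \<beta>0 (t \<odot> h0) h0"
    and \<xi>: "is_2cell \<xi> h1 h0" and mor: "\<xi> \<cdot> \<beta>1 = \<beta>0 \<cdot> (i2 t \<star> \<xi>)"
  shows "descent_of h0 \<beta>0 \<cdot> (i2 d1 \<star> \<xi>) = (i2 d0 \<star> \<xi>) \<cdot> descent_of h1 \<beta>1"
proof -
  have exchange: "(alpha_bar \<star> i2 h0) \<cdot> (i2 d1 \<star> \<xi>) = (i2 d0 \<star> (i2 t \<star> \<xi>)) \<cdot> (alpha_bar \<star> i2 h1)"
    using h1 h0 \<xi> whisker_exchange[of \<xi> alpha_bar] whisker_left_comp1[of \<xi> d0 t]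
    by (simp add: cells)
  have "descent_of h0 \<beta>0 \<cdot> (i2 d1 \<star> \<xi>) = (i2 d0 \<star> (\<beta>0 \<cdot> (i2 t \<star> \<xi>))) \<cdot> (alpha_bar \<star> i2 h1)"
    unfolding descent_of_def
    using h1 h0 \<beta>0 \<xi> whisker_left_vcomp[of "i2 t \<star> \<xi>" \<beta>0 d0]
    by (simp add: exchange cells vcomp_assoc)
  also have "\<dots> = (i2 d0 \<star> \<xi>) \<cdot> descent_of h1 \<beta>1"
    unfolding descent_of_def mor[symmetric]
    using h1 h0 \<beta>1 \<xi> whisker_left_vcomp[of \<beta>1 \<xi> d0]
    by (simp add: cells vcomp_assoc)
  finally show ?thesis .
qed

abbreviation "DescP x \<equiv> Desc b d0 d1 D0 D1 D2 s0 x"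
abbreviation "AlgT x \<equiv> Alg b t m \<eta> x"

lemma Desc_obj_iff: "(h, \<beta>) \<in> cobj (DescP x) \<longleftrightarrow>
    is_1cell h x b \<and> is_2cell \<beta> (d1 \<odot> h) (d0 \<odot> h) \<and>
    (i2 D0 \<star> \<beta>) \<cdot> (i2 D2 \<star> \<beta>) = i2 D1 \<star> \<beta> \<and> i2 s0 \<star> \<beta> = i2 h"
  by (simp add: Desc_def Let_def)

lemma Alg_obj_iff: "(h, \<beta>) \<in> cobj (AlgT x) \<longleftrightarrow>
    is_1cell h x b \<and> is_2cell \<beta> (t \<odot> h) h \<and>
    \<beta> \<cdot> (i2 t \<star> \<beta>) = \<beta> \<cdot> (m \<star> i2 h) \<and> \<beta> \<cdot> (\<eta> \<star> i2 h) = i2 h"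
  by (simp add: Alg_def Let_def)

lemma Desc_arr_iff: "((h1, \<beta>1), \<xi>, (h0, \<beta>0)) \<in> carr (DescP x) \<longleftrightarrow>
    (h1, \<beta>1) \<in> cobj (DescP x) \<and> (h0, \<beta>0) \<in> cobj (DescP x) \<and>
    is_2cell \<xi> h1 h0 \<and> \<beta>0 \<cdot> (i2 d1 \<star> \<xi>) = (i2 d0 \<star> \<xi>) \<cdot> \<beta>1"
  by (simp add: Desc_def Let_def)

lemma Alg_arr_iff: "((h1, \<beta>1), \<xi>, (h0, \<beta>0)) \<in> carr (AlgT x) \<longleftrightarrow>
    (h1, \<beta>1) \<in> cobj (AlgT x) \<and> (h0, \<beta>0) \<in> cobj (AlgT x) \<and>
    is_2cell \<xi> h1 h0 \<and> \<xi> \<cdot> \<beta>1 = \<beta>0 \<cdot> (i2 t \<star> \<xi>)"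
  by (simp add: Alg_def Let_def)

lemma vcomp_cat_Desc: "vcomp_cat (DescP x)"
  unfolding vcomp_cat_def by (auto simp: Desc_def Let_def)

lemma vcomp_cat_Alg: "vcomp_cat (AlgT x)"
  unfolding vcomp_cat_def by (auto simp: Alg_def Let_def)

definition desc_to_alg :: "'a \<times> 'c \<Rightarrow> 'a \<times> 'c" where
  "desc_to_alg = (\<lambda>(h, \<beta>). (h, i2 nu \<star> \<beta>))"

definition alg_to_desc :: "'a \<times> 'c \<Rightarrow> 'a \<times> 'c" where
  "alg_to_desc = (\<lambda>(h, \<beta>). (h, descent_of h \<beta>))"

lemma fst_desc_to_alg: "fst (desc_to_alg ob) = fst ob"
  by (cases ob) (simp add: desc_to_alg_def)

lemma desc_to_alg_obj:
  assumes "ob \<in> cobj (DescP x)"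
  shows "desc_to_alg ob \<in> cobj (AlgT x) \<and> alg_to_desc (desc_to_alg ob) = ob"
  using assms nu_descent_unit[of _ x] nu_descent_assoc[of _ x] descent_from_nu[of _ x]
  by (cases ob) (auto simp: Desc_obj_iff Alg_obj_iff desc_to_alg_def alg_to_desc_def
      descent_of_def cells)

lemma alg_to_desc_obj:
  assumes "ob \<in> cobj (AlgT x)"
  shows "alg_to_desc ob \<in> cobj (DescP x) \<and> desc_to_alg (alg_to_desc ob) = ob"
  using assms descent_of_cell[of _ x] descent_of_normal[of _ x] descent_of_cocycle[of _ x]
    nu_descent_of[of _ x]
  by (cases ob) (auto simp: Desc_obj_iff Alg_obj_iff desc_to_alg_def alg_to_desc_def)

lemma desc_to_alg_arr:
  assumes "(o1, \<xi>, o0) \<in> carr (DescP x)"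
  shows "(desc_to_alg o1, \<xi>, desc_to_alg o0) \<in> carr (AlgT x)"
proof -
  obtain h1 \<beta>1 h0 \<beta>0 where o: "o1 = (h1, \<beta>1)" "o0 = (h0, \<beta>0)" by fastforce
  have obs: "(h1, \<beta>1) \<in> cobj (DescP x)" "(h0, \<beta>0) \<in> cobj (DescP x)"
    and \<xi>: "is_2cell \<xi> h1 h0" "\<beta>0 \<cdot> (i2 d1 \<star> \<xi>) = (i2 d0 \<star> \<xi>) \<cdot> \<beta>1"
    using assms unfolding o Desc_arr_iff by blast+
  have "\<xi> \<cdot> (i2 nu \<star> \<beta>1) = (i2 nu \<star> \<beta>0) \<cdot> (i2 t \<star> \<xi>)"
    using obs \<xi> nu_descent_morphism[of h1 x h0 \<beta>1 \<beta>0 \<xi>] by (simp add: Desc_obj_iff)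
  then show ?thesis
    using obs \<xi> desc_to_alg_obj[of "(h1, \<beta>1)" x] desc_to_alg_obj[of "(h0, \<beta>0)" x]
    unfolding o by (simp add: Alg_arr_iff desc_to_alg_def)
qed

lemma alg_to_desc_arr:
  assumes "(o1, \<xi>, o0) \<in> carr (AlgT x)"
  shows "(alg_to_desc o1, \<xi>, alg_to_desc o0) \<in> carr (DescP x)"
proof -
  obtain h1 \<beta>1 h0 \<beta>0 where o: "o1 = (h1, \<beta>1)" "o0 = (h0, \<beta>0)" by fastforce
  have obs: "(h1, \<beta>1) \<in> cobj (AlgT x)" "(h0, \<beta>0) \<in> cobj (AlgT x)"
    and \<xi>: "is_2cell \<xi> h1 h0" "\<xi> \<cdot> \<beta>1 = \<beta>0 \<cdot> (i2 t \<star> \<xi>)"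
    using assms unfolding o Alg_arr_iff by blast+
  have "descent_of h0 \<beta>0 \<cdot> (i2 d1 \<star> \<xi>) = (i2 d0 \<star> \<xi>) \<cdot> descent_of h1 \<beta>1"
    using obs \<xi> descent_of_morphism[of h1 x h0 \<beta>1 \<beta>0 \<xi>] by (simp add: Alg_obj_iff)
  then show ?thesis
    using obs \<xi> alg_to_desc_obj[of "(h1, \<beta>1)" x] alg_to_desc_obj[of "(h0, \<beta>0)" x]
    unfolding o by (simp add: Desc_arr_iff alg_to_desc_def)
qed

lemma desc_to_alg_iso: "cat_iso (DescP x) (AlgT x) (lift_obj_map desc_to_alg)"
proof (rule cat_iso_lift_obj_map[OF vcomp_cat_Desc vcomp_cat_Alg _ _ desc_to_alg_arr alg_to_desc_arr])
  show "desc_to_alg ob \<in> cobj (AlgT x) \<and> fst (desc_to_alg ob) = fst ob \<and>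
      alg_to_desc (desc_to_alg ob) = ob" if "ob \<in> cobj (DescP x)" for ob
    using that desc_to_alg_obj fst_desc_to_alg by blast
  show "alg_to_desc ob \<in> cobj (DescP x) \<and> fst (alg_to_desc ob) = fst ob \<and>
      desc_to_alg (alg_to_desc ob) = ob" if "ob \<in> cobj (AlgT x)" for ob
    using that alg_to_desc_obj by (cases ob) (auto simp: alg_to_desc_def)
qed

lemma desc_to_alg_comparison:
  "fun_eq (homcat x e) (fcomp (lift_obj_map desc_to_alg) (Kfun p \<alpha>)) (Kfun p \<gamma>)"
proof -
  have K: "desc_to_alg (p \<odot> g, \<alpha> \<star> i2 g) = (p \<odot> g, \<gamma> \<star> i2 g)" if "is_1cell g x e" for g
    using that whisker_left_right[of \<alpha> nu g] by (simp add: desc_to_alg_def cells nu(6))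
  show ?thesis
    unfolding fun_eq_def fcomp_def lift_obj_map_def Kfun_def homcat_def
    by (auto simp: K cells)
qed

lemma desc_to_alg_precomp:
  assumes "is_1cell f x' x" "(h, \<beta>) \<in> cobj (DescP x)"
  shows "desc_to_alg (h \<odot> f, \<beta> \<star> i2 f) = (h \<odot> f, (i2 nu \<star> \<beta>) \<star> i2 f)"
  using assms whisker_left_right[of \<beta> nu f] by (simp add: desc_to_alg_def Desc_obj_iff cells)

lemma desc_to_alg_natural_1cell:
  assumes "f \<in> cobj (homcat x' x)"
  shows "fun_eq (DescP x) (fcomp (lift_obj_map desc_to_alg) (precomp1 f))
    (fcomp (precomp1 f) (lift_obj_map desc_to_alg))"
  using assms desc_to_alg_precomp[of f x' x]
  unfolding fun_eq_def fcomp_def lift_obj_map_def precomp1_def homcat_def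
  by (force simp: desc_to_alg_def Desc_arr_iff)

lemma desc_to_alg_natural_2cell:
  assumes "\<theta> \<in> carr (homcat x' x)" "ob \<in> cobj (DescP x)"
  shows "snd (lift_obj_map desc_to_alg) (precomp2 \<theta> ob) = precomp2 \<theta> (fst (lift_obj_map desc_to_alg) ob)"
  using assms desc_to_alg_precomp[of "s2 \<theta>" x' x] desc_to_alg_precomp[of "t2 \<theta>" x' x]
  unfolding lift_obj_map_def precomp2_def homcat_def
  by (cases ob) (simp add: desc_to_alg_def)

end

theorem theorem4p7:
  fixes A :: "('o,'a,'c) two_cat"
    and e b B P :: 'o
    and p d0 d1 D0 D1 D2 s0 t :: 'a
    and \<alpha> \<gamma> m \<eta> :: 'c
  assumes "two_category A"
    and "TC.is_cokernel_diagram A e b p B d0 d1 \<alpha> P D0 D1 D2 s0"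
    and "TC.is_ran A p p t \<gamma>"
    and "TC.preserves_ran A d0 p p t \<gamma>"
    and "TC.is_codensity_monad A b p t \<gamma> m \<eta>"
  shows "\<exists>\<Phi>.
     (\<forall>x\<in>tc_obj A.
        cat_iso (TC.Desc A b d0 d1 D0 D1 D2 s0 x) (TC.Alg A b t m \<eta> x) (\<Phi> x) \<and>
        fun_eq (TC.Desc A b d0 d1 D0 D1 D2 s0 x) (fcomp forget (\<Phi> x)) forget \<and>
        fun_eq (TC.homcat A x e) (fcomp (\<Phi> x) (TC.Kfun A p \<alpha>)) (TC.Kfun A p \<gamma>)) \<and>
     (\<forall>x\<in>tc_obj A. \<forall>x'\<in>tc_obj A.
        (\<forall>f\<in>cobj (TC.homcat A x' x).
           fun_eq (TC.Desc A b d0 d1 D0 D1 D2 s0 x)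
             (fcomp (\<Phi> x') (TC.precomp1 A f)) (fcomp (TC.precomp1 A f) (\<Phi> x))) \<and>
        (\<forall>\<theta>\<in>carr (TC.homcat A x' x). \<forall>ob\<in>cobj (TC.Desc A b d0 d1 D0 D1 D2 s0 x).
           snd (\<Phi> x') (TC.precomp2 A \<theta> ob) = TC.precomp2 A \<theta> (fst (\<Phi> x) ob)))"
proof -
  \<comment> \<open>The Kan extension hypothesis is already part of \<open>is_codensity_monad\<close>.\<close>
  interpret codensity_descent A e b B P p d0 d1 D0 D1 D2 s0 t \<alpha> \<gamma> m \<eta>
    using assms(1,2,4,5) unfolding codensity_descent_def codensity_descent_axioms_def by blast
  show ?thesis
    using desc_to_alg_iso fun_eq_forget_lift_obj_map[OF fst_desc_to_alg]
      desc_to_alg_comparison desc_to_alg_natural_1cell desc_to_alg_natural_2cell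
    by (intro exI[of _ "\<lambda>x. lift_obj_map desc_to_alg"]) blast
qed

end
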